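(* Let $z_1,\dots,z_n$ be i.i.d. random vectors in $\mathbb R^d$ with distribution $Q_z$, and let $\varepsilon_1,\dots,\varepsilon_n$ be a Rademacher sequence (i.i.d., $\pm1$ with probability $1/2$ each) independent of $\{z_i\}$. Let $\tilde R,\tilde K>0$ and let $\mathcal G(\tilde R,\tilde K)$ be a (countable) class of functions $g$ on $\mathbb R^d$ with $\|g\|_\infty\le\tilde K$ and $\|g\|\le\tilde R$ for all $g$ in the class. Let $G:[0,\infty)\to[0,\infty)$ be a continuous, strictly increasing, strictly convex bijection, and let $H(v)=\sup_{u\ge0}\{vu-G(u)\}$ be its convex conjugate. Put $\tilde R_n^2=\sup_{g\in\mathcal G(\tilde R,\tilde K)}\|g\|_n^2$, and suppose $$\mathbb E\sup_{g\in\mathcal G(\tilde R,\tilde K)}\Big|\frac1n\sum_{i=1}^n g(z_i)\varepsilon_i\Big|\le \frac{\mathbb E\, G^{-1}(\tilde R_n^2)}{\sqrt n}.$$ Then, whenever $\tilde R^2\ge H(16\tilde K/\sqrt n)/2$, $$\mathbb E\,G^{-1}(\tilde R_n^2)\le G^{-1}(4\tilde R^2)\quad\text{and}\quad \mathbb E\sup_{g\in\mathcal G(\tilde R,\tilde K)}\big|\|g\|_n^2-\|g\|^2\big|\le \frac{8\tilde K\,G^{-1}(4\tilde R^2)}{\sqrt n}.$$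
   Context: $\|g\|^2=\mathbb E g(z_1)^2$ (the $L_2(Q_z)$ norm), $\|g\|_n^2=\frac1n\sum_{i=1}^n g(z_i)^2$, $\|g\|_\infty=\sup|g|$. *)

theory Defs
  imports "HOL-Probability.Probability"
begin

definition strict_convex_on :: "real set \<Rightarrow> (real \<Rightarrow> real) \<Rightarrow> bool" where
  "strict_convex_on S f \<longleftrightarrow>
     (\<forall>x\<in>S. \<forall>y\<in>S. \<forall>t. x \<noteq> y \<and> 0 < t \<and> t < 1 \<longrightarrow>
        f ((1 - t) * x + t * y) < (1 - t) * f x + t * f y)"

definition rademacher :: "real measure" where
  "rademacher = distr (measure_pmf (pmf_of_set {-1, 1})) borel (\<lambda>x. x)"

definition conj_fun :: "(real \<Rightarrow> real) \<Rightarrow> real \<Rightarrow> ereal" where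
  "conj_fun G v = (SUP u\<in>{0..}. ereal (v * u - G u))"

definition L2sq :: "'x measure \<Rightarrow> ('x \<Rightarrow> real) \<Rightarrow> real" where
  "L2sq Q g = (\<integral>x. (g x)^2 \<partial>Q)"

definition empsq :: "nat \<Rightarrow> (nat \<Rightarrow> 'x) \<Rightarrow> ('x \<Rightarrow> real) \<Rightarrow> real" where
  "empsq n zs g = (1 / real n) * (\<Sum>i<n. (g (zs i))^2)"

end

theory Submission
  imports Defs
begin

text \<open>
  Symmetrisation (a ghost sample, then random swaps of sample and ghost) bounds the expected
  uniform deviation \<open>E sup |\<parallel>g\<parallel>\<^sub>n\<^sup>2 - \<parallel>g\<parallel>\<^sup>2|\<close> by twice the Rademacher average of the squares
  \<open>g(z\<^sub>i)\<^sup>2\<close>. Since \<open>u \<mapsto> u\<^sup>2\<close> is \<open>2K\<close>-Lipschitz on \<open>[-K, K]\<close>, the contraction principle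
  (with a further factor 2 for the absolute value) replaces the squares by \<open>g(z\<^sub>i)\<close>, so the
  deviation is at most \<open>8K\<close> times the Rademacher average, hence at most \<open>8K x / \<surd>n\<close> with
  \<open>x = E G\<^sup>-\<^sup>1(R\<^sub>n\<^sup>2)\<close>. As \<open>R\<^sub>n\<^sup>2 \<le> R\<^sup>2 + sup |\<parallel>g\<parallel>\<^sub>n\<^sup>2 - \<parallel>g\<parallel>\<^sup>2|\<close>, Jensen's inequality for the convex
  \<open>G\<close> gives \<open>G x \<le> R\<^sup>2 + 8K x / \<surd>n\<close>, and the Fenchel--Young inequality
  \<open>(16K/\<surd>n) x \<le> G x + H(16K/\<surd>n) \<le> G x + 2R\<^sup>2\<close> turns this into \<open>G x \<le> 4R\<^sup>2\<close>.
\<close>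

lemma prob_space_rademacher: "prob_space rademacher"
  unfolding rademacher_def by (rule prob_space.prob_space_distr) (auto intro: prob_space_measure_pmf)

lemma sets_rademacher [simp, measurable_cong]: "sets rademacher = sets borel"
  unfolding rademacher_def by simp

lemma space_rademacher [simp]: "space rademacher = UNIV"
  unfolding rademacher_def by simp

lemma emeasure_rademacher:
  assumes "C \<in> sets borel"
  shows "emeasure rademacher C = ennreal (card ({-1, 1::real} \<inter> C) / 2)"
  unfolding rademacher_def using assms
  by (subst emeasure_distr) (auto simp: emeasure_pmf_of_set)

lemma AE_rademacher: "AE x in rademacher. x \<in> {-1, 1}"
proof -
  have "emeasure rademacher (UNIV - {-1, 1}) = 0"
    by (subst emeasure_rademacher) auto
  then show ?thesis
    by (intro AE_I[of _ _ "UNIV - {-1, 1}"]) auto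
qed

lemma distr_PiM_zip:
  fixes A :: "'a measure" and B :: "'b measure"
  assumes I: "finite I" and "prob_space A" and "prob_space B"
  shows "distr (PiM I (\<lambda>_. A) \<Otimes>\<^sub>M PiM I (\<lambda>_. B)) (PiM I (\<lambda>_. A \<Otimes>\<^sub>M B))
           (\<lambda>p. \<lambda>i\<in>I. (fst p i, snd p i)) = PiM I (\<lambda>_. A \<Otimes>\<^sub>M B)"
    (is "distr ?AB ?P ?zip = ?P")
proof -
  interpret A: prob_space A by fact
  interpret B: prob_space B by fact
  interpret AB: pair_prob_space A B by unfold_locales
  interpret PA: product_prob_space "\<lambda>_. A" I by unfold_locales
  interpret PB: product_prob_space "\<lambda>_. B" I by unfold_locales
  interpret PAB: product_sigma_finite "\<lambda>_. A \<Otimes>\<^sub>M B" by unfold_locales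
  interpret PP: pair_prob_space "PiM I (\<lambda>_. A)" "PiM I (\<lambda>_. B)"
    by (simp add: pair_prob_space_def pair_sigma_finite_def PA.sigma_finite_measure_axioms
        PB.sigma_finite_measure_axioms PA.prob_space_axioms PB.prob_space_axioms)
  have meas[measurable]: "?zip \<in> measurable ?AB ?P"
    by (rule measurable_restrict) measurable
  show ?thesis
  proof (rule PAB.PiM_eqI[OF I])
    fix C assume C: "\<And>i. i \<in> I \<Longrightarrow> C i \<in> sets (A \<Otimes>\<^sub>M B)"
    have Csub: "C i \<subseteq> space A \<times> space B" if "i \<in> I" for i
      using sets.sets_into_space[OF C[OF that]] by (simp add: space_pair_measure)
    have CPi[measurable]: "Pi\<^sub>E I C \<in> sets ?P"
      using C by (intro sets_PiM_I_finite I) auto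
    define f where "f i a = emeasure B (Pair a -` C i)" for i a
    have fm[measurable]: "f i \<in> borel_measurable A" if "i \<in> I" for i
      unfolding f_def using C[OF that] by (rule B.measurable_emeasure_Pair)
    have slice: "Pair x -` (?zip -` Pi\<^sub>E I C \<inter> space ?AB) = Pi\<^sub>E I (\<lambda>i. Pair (x i) -` C i)"
      if x: "x \<in> space (PiM I (\<lambda>_. A))" for x
      using x Csub by (auto simp: space_pair_measure space_PiM PiE_iff)
    have "emeasure (distr ?AB ?P ?zip) (Pi\<^sub>E I C) = emeasure ?AB (?zip -` Pi\<^sub>E I C \<inter> space ?AB)"
      by (rule emeasure_distr) auto
    also have "\<dots> = (\<integral>\<^sup>+ x. emeasure (PiM I (\<lambda>_. B)) (Pair x -` (?zip -` Pi\<^sub>E I C \<inter> space ?AB))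
                     \<partial>PiM I (\<lambda>_. A))"
      using measurable_sets[OF meas CPi]
      by (rule sigma_finite_measure.emeasure_pair_measure_alt[rotated]) unfold_locales
    also have "\<dots> = (\<integral>\<^sup>+ x. (\<Prod>i\<in>I. f i (x i)) \<partial>PiM I (\<lambda>_. A))"
    proof (rule nn_integral_cong)
      fix x assume x: "x \<in> space (PiM I (\<lambda>_. A))"
      have "Pair (x i) -` C i \<in> sets B" if "i \<in> I" for i
        using x that C by (intro sets_Pair1) (auto simp: space_PiM)
      then show "emeasure (PiM I (\<lambda>_. B)) (Pair x -` (?zip -` Pi\<^sub>E I C \<inter> space ?AB))
          = (\<Prod>i\<in>I. f i (x i))"
        unfolding slice[OF x] f_def by (simp add: PB.emeasure_PiM I)
    qed
    also have "\<dots> = (\<Prod>i\<in>I. integral\<^sup>N A (f i))"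
      by (rule PA.product_nn_integral_prod[OF I fm])
    also have "\<dots> = (\<Prod>i\<in>I. emeasure (A \<Otimes>\<^sub>M B) (C i))"
      by (rule prod.cong) (auto simp: f_def[abs_def] C
          sigma_finite_measure.emeasure_pair_measure_alt[OF B.sigma_finite_measure_axioms])
    finally show "emeasure (distr ?AB ?P ?zip) (Pi\<^sub>E I C) = (\<Prod>i\<in>I. emeasure (A \<Otimes>\<^sub>M B) (C i))" .
  qed simp
qed

lemma distr_PiM_coordinatewise:
  fixes N :: "'a measure"
  assumes I: "finite I" and "prob_space N"
    and fm[measurable]: "\<And>i. i \<in> I \<Longrightarrow> f i \<in> measurable N N"
    and fd: "\<And>i. i \<in> I \<Longrightarrow> distr N N (f i) = N"
  shows "distr (PiM I (\<lambda>_. N)) (PiM I (\<lambda>_. N)) (\<lambda>\<omega>. \<lambda>i\<in>I. f i (\<omega> i)) = PiM I (\<lambda>_. N)"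
    (is "distr ?P ?P ?F = ?P")
proof -
  interpret N: prob_space N by fact
  interpret PN: product_prob_space "\<lambda>_. N" I by unfold_locales
  have meas[measurable]: "?F \<in> measurable ?P ?P"
    by (rule measurable_restrict) (use fm in measurable)
  show ?thesis
  proof (rule PN.PiM_eqI[OF I])
    fix C assume C: "\<And>i. i \<in> I \<Longrightarrow> C i \<in> sets N"
    have CPi: "Pi\<^sub>E I C \<in> sets ?P"
      using C by (intro sets_PiM_I_finite I) auto
    have pre: "?F -` Pi\<^sub>E I C \<inter> space ?P = Pi\<^sub>E I (\<lambda>i. f i -` C i \<inter> space N)"
      by (auto simp: space_PiM PiE_iff)
    have "emeasure (distr ?P ?P ?F) (Pi\<^sub>E I C) = emeasure ?P (Pi\<^sub>E I (\<lambda>i. f i -` C i \<inter> space N))"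
      using CPi by (subst emeasure_distr) (auto simp: pre)
    also have "\<dots> = (\<Prod>i\<in>I. emeasure N (f i -` C i \<inter> space N))"
      using C by (intro PN.emeasure_PiM I) (auto intro: measurable_sets[OF fm])
    also have "\<dots> = (\<Prod>i\<in>I. emeasure N (C i))"
    proof (rule prod.cong[OF refl])
      fix i assume i: "i \<in> I"
      have "emeasure N (f i -` C i \<inter> space N) = emeasure (distr N N (f i)) (C i)"
        using C[OF i] fm[OF i] by (simp add: emeasure_distr)
      then show "emeasure N (f i -` C i \<inter> space N) = emeasure N (C i)"
        using fd[OF i] by simp
    qed
    finally show "emeasure (distr ?P ?P ?F) (Pi\<^sub>E I C) = (\<Prod>i\<in>I. emeasure N (C i))" .
  qed simp
qed

definition sign_vectors :: "'i set \<Rightarrow> ('i \<Rightarrow> real) set" where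
  "sign_vectors I = PiE I (\<lambda>_. {-1, 1})"

lemma finite_sign_vectors: "finite I \<Longrightarrow> finite (sign_vectors I)"
  unfolding sign_vectors_def by (intro finite_PiE) auto

lemma sign_vectors_nonempty: "sign_vectors I \<noteq> {}"
  unfolding sign_vectors_def by (simp add: PiE_eq_empty_iff)

lemma card_sign_vectors: "finite I \<Longrightarrow> card (sign_vectors I) = 2 ^ card I"
  unfolding sign_vectors_def by (simp add: card_PiE numeral_2_eq_2)

lemma abs_sign_vector: "s \<in> sign_vectors I \<Longrightarrow> i \<in> I \<Longrightarrow> \<bar>s i\<bar> = 1"
  unfolding sign_vectors_def by (auto simp: PiE_iff)

lemma abs_sum_sign_vector_le:
  assumes "s \<in> sign_vectors I" "\<And>i. i \<in> I \<Longrightarrow> \<bar>v i\<bar> \<le> c"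
  shows "\<bar>\<Sum>i\<in>I. s i * v i\<bar> \<le> real (card I) * c"
proof -
  have "\<bar>\<Sum>i\<in>I. s i * v i\<bar> \<le> (\<Sum>i\<in>I. \<bar>s i * v i\<bar>)" by (rule sum_abs)
  also have "\<dots> \<le> (\<Sum>i\<in>I. c)"
    using assms by (intro sum_mono) (simp add: abs_mult abs_sign_vector)
  finally show ?thesis by simp
qed

lemma sum_sign_vectors_insert:
  assumes "finite I" "j \<notin> I"
  shows "(\<Sum>s\<in>sign_vectors (insert j I). F s)
       = (\<Sum>s\<in>sign_vectors I. F (s(j := -1)) + F (s(j := 1)))"
proof -
  have "sign_vectors (insert j I) = (\<lambda>(y, s). s(j := y)) ` ({-1, 1} \<times> sign_vectors I)"
    unfolding sign_vectors_def by (rule PiE_insert_eq)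
  then have "(\<Sum>s\<in>sign_vectors (insert j I). F s)
      = (\<Sum>p\<in>{-1, 1::real} \<times> sign_vectors I. F ((\<lambda>(y, s). s(j := y)) p))"
    using inj_combinator[OF assms(2), of "\<lambda>_. {-1, 1::real}"]
    by (simp add: sum.reindex sign_vectors_def)
  also have "\<dots> = (\<Sum>y\<in>{-1, 1::real}. \<Sum>s\<in>sign_vectors I. F (s(j := y)))"
    by (subst sum.cartesian_product') simp
  also have "\<dots> = (\<Sum>s\<in>sign_vectors I. F (s(j := -1)) + F (s(j := 1)))"
    by (simp add: sum.distrib)
  finally show ?thesis .
qed

lemma sum_fun_upd_insert:
  assumes "finite I" "j \<notin> I"
  shows "(\<Sum>i\<in>insert j I. (s(j := y)) i * v i) = y * v j + (\<Sum>i\<in>I. s i * v i)"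
proof -
  have "(\<Sum>i\<in>I. (s(j := y)) i * v i) = (\<Sum>i\<in>I. s i * v i)"
    using assms by (intro sum.cong) auto
  then show ?thesis using assms by simp
qed

lemma PiM_rademacher_eq_uniform_signs:
  assumes I: "finite I"
  shows "PiM I (\<lambda>_. rademacher)
       = distr (measure_pmf (pmf_of_set (sign_vectors I))) (PiM I (\<lambda>_. rademacher)) (\<lambda>s. restrict s I)"
proof -
  interpret R: prob_space rademacher by (rule prob_space_rademacher)
  interpret PR: product_prob_space "\<lambda>_. rademacher" I by unfold_locales
  have [simp]: "finite (sign_vectors I)" "sign_vectors I \<noteq> {}"
    using finite_sign_vectors[OF I] sign_vectors_nonempty by auto
  have meas: "(\<lambda>s. restrict s I)
      \<in> measurable (measure_pmf (pmf_of_set (sign_vectors I))) (PiM I (\<lambda>_. rademacher))"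
    by (simp add: space_PiM)
  show ?thesis
  proof (rule PR.PiM_eqI[OF I, symmetric])
    fix C assume C: "\<And>i. i \<in> I \<Longrightarrow> C i \<in> sets rademacher"
    have CPi: "Pi\<^sub>E I C \<in> sets (PiM I (\<lambda>_. rademacher))"
      using C by (intro sets_PiM_I_finite I) auto
    have eq: "sign_vectors I \<inter> ((\<lambda>s. restrict s I) -` Pi\<^sub>E I C) = PiE I (\<lambda>i. {-1, 1} \<inter> C i)"
      by (auto simp: sign_vectors_def PiE_iff)
    have "emeasure (distr (measure_pmf (pmf_of_set (sign_vectors I))) (PiM I (\<lambda>_. rademacher))
          (\<lambda>s. restrict s I)) (Pi\<^sub>E I C)
       = emeasure (measure_pmf (pmf_of_set (sign_vectors I))) ((\<lambda>s. restrict s I) -` Pi\<^sub>E I C)"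
      using CPi meas by (subst emeasure_distr) auto
    also have "\<dots> = ennreal (real (card (PiE I (\<lambda>i. {-1, 1::real} \<inter> C i))) / real (card (sign_vectors I)))"
      by (subst emeasure_pmf_of_set) (auto simp: eq)
    also have "\<dots> = ennreal (\<Prod>i\<in>I. real (card ({-1, 1::real} \<inter> C i)) / 2)"
      using I by (simp add: card_PiE card_sign_vectors prod_dividef)
    also have "\<dots> = (\<Prod>i\<in>I. ennreal (real (card ({-1, 1::real} \<inter> C i)) / 2))"
      by (rule prod_ennreal[symmetric]) auto
    also have "\<dots> = (\<Prod>i\<in>I. emeasure rademacher (C i))"
      using C by (intro prod.cong refl) (simp add: emeasure_rademacher)
    finally show "emeasure (distr (measure_pmf (pmf_of_set (sign_vectors I))) (PiM I (\<lambda>_. rademacher))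
          (\<lambda>s. restrict s I)) (Pi\<^sub>E I C) = (\<Prod>i\<in>I. emeasure rademacher (C i))" .
  qed simp
qed

lemma integral_PiM_rademacher:
  fixes F :: "('i \<Rightarrow> real) \<Rightarrow> real"
  assumes I: "finite I" and Fm: "F \<in> borel_measurable (PiM I (\<lambda>_. rademacher))"
  shows "(\<integral>s. F s \<partial>PiM I (\<lambda>_. rademacher)) = (\<Sum>s\<in>sign_vectors I. F s) / 2 ^ card I"
proof -
  have [simp]: "finite (sign_vectors I)" "sign_vectors I \<noteq> {}"
    using finite_sign_vectors[OF I] sign_vectors_nonempty by auto
  have meas: "(\<lambda>s. restrict s I)
      \<in> measurable (measure_pmf (pmf_of_set (sign_vectors I))) (PiM I (\<lambda>_. rademacher))"
    by (simp add: space_PiM)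
  have "(\<integral>s. F s \<partial>PiM I (\<lambda>_. rademacher))
      = (\<integral>s. F (restrict s I) \<partial>measure_pmf (pmf_of_set (sign_vectors I)))"
    by (subst PiM_rademacher_eq_uniform_signs[OF I]) (rule integral_distr[OF meas Fm])
  also have "\<dots> = (\<Sum>s\<in>sign_vectors I. F (restrict s I)) / real (card (sign_vectors I))"
    by (rule integral_pmf_of_set) auto
  also have "(\<Sum>s\<in>sign_vectors I. F (restrict s I)) = (\<Sum>s\<in>sign_vectors I. F s)"
    by (intro sum.cong refl) (auto simp: sign_vectors_def PiE_iff extensional_restrict)
  finally show ?thesis using I by (simp add: card_sign_vectors)
qed

subsection \<open>The contraction principle for finitely many signs\<close>

lemma cSUP_plus_cSUP_minus_contraction:
  fixes B p q :: "'t \<Rightarrow> real"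
  assumes T: "T \<noteq> {}"
    and bB: "\<And>t. t \<in> T \<Longrightarrow> \<bar>B t\<bar> \<le> c" and bq: "\<And>t. t \<in> T \<Longrightarrow> \<bar>q t\<bar> \<le> c"
    and lip: "\<And>t t'. t \<in> T \<Longrightarrow> t' \<in> T \<Longrightarrow> \<bar>p t - p t'\<bar> \<le> \<bar>q t - q t'\<bar>"
  shows "(SUP t\<in>T. B t + p t) + (SUP t\<in>T. B t - p t) \<le> (SUP t\<in>T. B t + q t) + (SUP t\<in>T. B t - q t)"
    (is "?Sp + ?Sm \<le> ?S")
proof -
  have bdd: "bdd_above ((\<lambda>t. B t + q t) ` T)" "bdd_above ((\<lambda>t. B t - q t) ` T)"
    using bB bq by (fastforce intro!: bdd_aboveI[of _ "2 * c"] simp: abs_le_iff)+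
  have pair: "(B t + p t) + (B t' - p t') \<le> ?S" if t: "t \<in> T" "t' \<in> T" for t t'
  proof -
    have "B t + q t \<le> (SUP t\<in>T. B t + q t)" "B t' + q t' \<le> (SUP t\<in>T. B t + q t)"
      "B t - q t \<le> (SUP t\<in>T. B t - q t)" "B t' - q t' \<le> (SUP t\<in>T. B t - q t)"
      using t bdd by (auto intro: cSUP_upper)
    moreover have "p t - p t' \<le> \<bar>q t - q t'\<bar>" using lip[OF t] by linarith
    ultimately show ?thesis by (cases "q t \<ge> q t'") (auto simp: abs_if)
  qed
  have "?Sp \<le> ?S - (B t' - p t')" if "t' \<in> T" for t'
    using T pair that by (intro cSUP_least) (auto simp: algebra_simps)
  then have "B t' - p t' \<le> ?S - ?Sp" if "t' \<in> T" for t'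
    using that by force
  then have "?Sm \<le> ?S - ?Sp"
    using T by (intro cSUP_least) auto
  then show ?thesis by linarith
qed

text \<open>Ledoux--Talagrand contraction; the offset \<open>A\<close> makes the induction on \<open>I\<close> go through.\<close>

lemma sum_sign_vectors_cSUP_contraction:
  fixes \<psi> u :: "'t \<Rightarrow> 'i \<Rightarrow> real"
  assumes I: "finite I" and T: "T \<noteq> {}"
    and bnd: "\<And>t i. t \<in> T \<Longrightarrow> i \<in> I \<Longrightarrow> \<bar>\<psi> t i\<bar> \<le> c \<and> \<bar>u t i\<bar> \<le> c"
    and lip: "\<And>t t' i. t \<in> T \<Longrightarrow> t' \<in> T \<Longrightarrow> i \<in> I \<Longrightarrow> \<bar>\<psi> t i - \<psi> t' i\<bar> \<le> \<bar>u t i - u t' i\<bar>"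
    and bA: "\<And>t. t \<in> T \<Longrightarrow> \<bar>A t\<bar> \<le> a"
  shows "(\<Sum>s\<in>sign_vectors I. (SUP t\<in>T. A t + (\<Sum>i\<in>I. s i * \<psi> t i)))
       \<le> (\<Sum>s\<in>sign_vectors I. (SUP t\<in>T. A t + (\<Sum>i\<in>I. s i * u t i)))"
  using I bnd lip bA
proof (induction I arbitrary: A a rule: finite_induct)
  case empty
  then show ?case by simp
next
  case (insert j I)
  have bnd': "\<And>t i. t \<in> T \<Longrightarrow> i \<in> I \<Longrightarrow> \<bar>\<psi> t i\<bar> \<le> c \<and> \<bar>u t i\<bar> \<le> c"
    and lip': "\<And>t t' i. t \<in> T \<Longrightarrow> t' \<in> T \<Longrightarrow> i \<in> I \<Longrightarrow> \<bar>\<psi> t i - \<psi> t' i\<bar> \<le> \<bar>u t i - u t' i\<bar>"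
    and bj: "\<And>t. t \<in> T \<Longrightarrow> \<bar>\<psi> t j\<bar> \<le> c \<and> \<bar>u t j\<bar> \<le> c"
    using insert.prems by auto
  let ?Su = "\<lambda>s t. A t + (\<Sum>i\<in>I. s i * u t i)"
  have IH: "(\<Sum>s\<in>sign_vectors I. (SUP t\<in>T. (A t + y * \<psi> t j) + (\<Sum>i\<in>I. s i * \<psi> t i)))
       \<le> (\<Sum>s\<in>sign_vectors I. (SUP t\<in>T. (A t + y * \<psi> t j) + (\<Sum>i\<in>I. s i * u t i)))"
    if y: "\<bar>y\<bar> = 1" for y
  proof (rule insert.IH[OF bnd' lip'])
    fix t assume t: "t \<in> T"
    have "\<bar>y * \<psi> t j\<bar> \<le> c" using y bj[OF t] by (simp add: abs_mult)
    then show "\<bar>A t + y * \<psi> t j\<bar> \<le> a + c" using insert.prems(3)[OF t] by linarith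
  qed auto
  have step: "(SUP t\<in>T. ?Su s t + \<psi> t j) + (SUP t\<in>T. ?Su s t - \<psi> t j)
     \<le> (SUP t\<in>T. ?Su s t + u t j) + (SUP t\<in>T. ?Su s t - u t j)"
    if s: "s \<in> sign_vectors I" for s
  proof (rule cSUP_plus_cSUP_minus_contraction[OF T, where c = "a + real (card I) * c + c"])
    fix t assume t: "t \<in> T"
    have "\<bar>\<Sum>i\<in>I. s i * u t i\<bar> \<le> real (card I) * c"
      using s bnd'[OF t] by (intro abs_sum_sign_vector_le) auto
    moreover have "0 \<le> c" using bj[OF t] by linarith
    ultimately show "\<bar>?Su s t\<bar> \<le> a + real (card I) * c + c" "\<bar>u t j\<bar> \<le> a + real (card I) * c + c"
      using insert.prems(3)[OF t] bj[OF t] by (auto simp: abs_le_iff)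
  next
    fix t t' assume "t \<in> T" "t' \<in> T"
    then show "\<bar>\<psi> t j - \<psi> t' j\<bar> \<le> \<bar>u t j - u t' j\<bar>" using insert.prems(2) by auto
  qed
  have "(\<Sum>s\<in>sign_vectors (insert j I). (SUP t\<in>T. A t + (\<Sum>i\<in>insert j I. s i * \<psi> t i)))
      = (\<Sum>s\<in>sign_vectors I. (SUP t\<in>T. (A t + (-1) * \<psi> t j) + (\<Sum>i\<in>I. s i * \<psi> t i)))
      + (\<Sum>s\<in>sign_vectors I. (SUP t\<in>T. (A t + 1 * \<psi> t j) + (\<Sum>i\<in>I. s i * \<psi> t i)))"
    unfolding sum_sign_vectors_insert[OF insert.hyps] sum_fun_upd_insert[OF insert.hyps]
    by (simp add: sum.distrib algebra_simps)
  also have "\<dots> \<le> (\<Sum>s\<in>sign_vectors I. (SUP t\<in>T. (A t + (-1) * \<psi> t j) + (\<Sum>i\<in>I. s i * u t i)))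
      + (\<Sum>s\<in>sign_vectors I. (SUP t\<in>T. (A t + 1 * \<psi> t j) + (\<Sum>i\<in>I. s i * u t i)))"
    by (intro add_mono IH) auto
  also have "\<dots> = (\<Sum>s\<in>sign_vectors I. (SUP t\<in>T. ?Su s t + \<psi> t j) + (SUP t\<in>T. ?Su s t - \<psi> t j))"
    by (simp add: sum.distrib algebra_simps)
  also have "\<dots> \<le> (\<Sum>s\<in>sign_vectors I. (SUP t\<in>T. ?Su s t + u t j) + (SUP t\<in>T. ?Su s t - u t j))"
    by (intro sum_mono step)
  also have "\<dots> = (\<Sum>s\<in>sign_vectors (insert j I). (SUP t\<in>T. A t + (\<Sum>i\<in>insert j I. s i * u t i)))"
    unfolding sum_sign_vectors_insert[OF insert.hyps] sum_fun_upd_insert[OF insert.hyps]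
    by (simp add: sum.distrib algebra_simps)
  finally show ?case .
qed

text \<open>
  The version with absolute values, which costs a factor 2: \<open>sup |X|\<close> is bounded by the sum of the
  suprema of \<open>X\<close> and \<open>-X\<close> over the index set enlarged by a point where everything vanishes
  (\<open>None\<close> below); this needs \<open>\<psi>\<close> to vanish wherever \<open>u\<close> does.
\<close>

lemma sum_sign_vectors_cSUP_abs_contraction:
  fixes \<psi> u :: "'t \<Rightarrow> 'i \<Rightarrow> real"
  assumes I: "finite I" and T: "T \<noteq> {}" and c0: "0 \<le> c"
    and bnd: "\<And>t i. t \<in> T \<Longrightarrow> i \<in> I \<Longrightarrow> \<bar>\<psi> t i\<bar> \<le> c \<and> \<bar>u t i\<bar> \<le> c"
    and lip: "\<And>t t' i. t \<in> T \<Longrightarrow> t' \<in> T \<Longrightarrow> i \<in> I \<Longrightarrow> \<bar>\<psi> t i - \<psi> t' i\<bar> \<le> \<bar>u t i - u t' i\<bar>"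
    and lip0: "\<And>t i. t \<in> T \<Longrightarrow> i \<in> I \<Longrightarrow> \<bar>\<psi> t i\<bar> \<le> \<bar>u t i\<bar>"
  shows "(\<Sum>s\<in>sign_vectors I. (SUP t\<in>T. \<bar>\<Sum>i\<in>I. s i * \<psi> t i\<bar>))
       \<le> 2 * (\<Sum>s\<in>sign_vectors I. (SUP t\<in>T. \<bar>\<Sum>i\<in>I. s i * u t i\<bar>))"
proof -
  define T' where "T' = insert None (Some ` T)"
  define ext where "ext f t i = (case t of None \<Rightarrow> 0 | Some t \<Rightarrow> f t i)" for f :: "'t \<Rightarrow> 'i \<Rightarrow> real" and t i
  let ?sup = "\<lambda>f s. SUP t\<in>T'. 0 + (\<Sum>i\<in>I. s i * ext f t i)"
  have T': "T' \<noteq> {}" "None \<in> T'" "\<And>t. t \<in> T \<Longrightarrow> Some t \<in> T'"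
    by (auto simp: T'_def)
  have bnd': "\<And>t i. t \<in> T' \<Longrightarrow> i \<in> I \<Longrightarrow> \<bar>ext f t i\<bar> \<le> c \<and> \<bar>ext u t i\<bar> \<le> c"
    if "f = \<psi> \<or> f = (\<lambda>t i. - \<psi> t i)" for f
    using bnd c0 that by (auto simp: T'_def ext_def)
  have lip': "\<And>t t' i. t \<in> T' \<Longrightarrow> t' \<in> T' \<Longrightarrow> i \<in> I \<Longrightarrow> \<bar>ext f t i - ext f t' i\<bar> \<le> \<bar>ext u t i - ext u t' i\<bar>"
    if "f = \<psi> \<or> f = (\<lambda>t i. - \<psi> t i)" for f
    using lip lip0 that by (auto simp: T'_def ext_def abs_minus_commute)
  have contr: "(\<Sum>s\<in>sign_vectors I. ?sup f s) \<le> (\<Sum>s\<in>sign_vectors I. ?sup u s)"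
    if "f = \<psi> \<or> f = (\<lambda>t i. - \<psi> t i)" for f
    by (rule sum_sign_vectors_cSUP_contraction[OF I T'(1) bnd'[OF that] lip'[OF that], where a = 0]) auto
  have bdd: "bdd_above ((\<lambda>t. 0 + (\<Sum>i\<in>I. s i * w t i)) ` T')"
    if s: "s \<in> sign_vectors I" and w: "\<And>t i. t \<in> T' \<Longrightarrow> i \<in> I \<Longrightarrow> \<bar>w t i\<bar> \<le> c" for s w
    using abs_sum_sign_vector_le[OF s w]
    by (intro bdd_aboveI[of _ "real (card I) * c"]) (auto simp: abs_le_iff)
  have bdd_u: "bdd_above ((\<lambda>t. \<bar>\<Sum>i\<in>I. s i * u t i\<bar>) ` T)" if s: "s \<in> sign_vectors I" for s
    using abs_sum_sign_vector_le[OF s, of "u t" c for t] bnd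
    by (intro bdd_aboveI[of _ "real (card I) * c"]) auto
  have split: "(SUP t\<in>T. \<bar>\<Sum>i\<in>I. s i * \<psi> t i\<bar>) \<le> ?sup \<psi> s + ?sup (\<lambda>t i. - \<psi> t i) s"
    if s: "s \<in> sign_vectors I" for s
  proof (rule cSUP_least[OF T])
    fix t assume t: "t \<in> T"
    have "0 + (\<Sum>i\<in>I. s i * ext f t' i) \<le> ?sup f s"
      if "f = \<psi> \<or> f = (\<lambda>t i. - \<psi> t i)" "t' \<in> T'" for f t'
      using that bdd[OF s, of "ext f"] bnd'[OF that(1)] by (intro cSUP_upper) auto
    from this[of \<psi> "Some t"] this[of \<psi> None] this[of "\<lambda>t i. - \<psi> t i" "Some t"]
      this[of "\<lambda>t i. - \<psi> t i" None]
    show "\<bar>\<Sum>i\<in>I. s i * \<psi> t i\<bar> \<le> ?sup \<psi> s + ?sup (\<lambda>t i. - \<psi> t i) s"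
      using t T' by (auto simp: ext_def sum_negf abs_if)
  qed
  have merge: "?sup u s \<le> (SUP t\<in>T. \<bar>\<Sum>i\<in>I. s i * u t i\<bar>)" if s: "s \<in> sign_vectors I" for s
  proof (rule cSUP_least[OF T'(1)])
    fix t assume t: "t \<in> T'"
    obtain t0 where t0: "t0 \<in> T" using T by auto
    have "0 \<le> (SUP t\<in>T. \<bar>\<Sum>i\<in>I. s i * u t i\<bar>)"
      using cSUP_upper[OF t0 bdd_u[OF s]] by (meson abs_ge_zero order_trans)
    moreover have "(\<Sum>i\<in>I. s i * u t1 i) \<le> (SUP t\<in>T. \<bar>\<Sum>i\<in>I. s i * u t i\<bar>)" if "t1 \<in> T" for t1
      using cSUP_upper[OF that bdd_u[OF s]] by (meson abs_ge_self order_trans)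
    ultimately show "0 + (\<Sum>i\<in>I. s i * ext u t i) \<le> (SUP t\<in>T. \<bar>\<Sum>i\<in>I. s i * u t i\<bar>)"
      using t by (auto simp: T'_def ext_def)
  qed
  have "(\<Sum>s\<in>sign_vectors I. (SUP t\<in>T. \<bar>\<Sum>i\<in>I. s i * \<psi> t i\<bar>))
      \<le> (\<Sum>s\<in>sign_vectors I. ?sup \<psi> s) + (\<Sum>s\<in>sign_vectors I. ?sup (\<lambda>t i. - \<psi> t i) s)"
    unfolding sum.distrib[symmetric] by (intro sum_mono split)
  also have "\<dots> \<le> (\<Sum>s\<in>sign_vectors I. ?sup u s) + (\<Sum>s\<in>sign_vectors I. ?sup u s)"
    by (intro add_mono contr) auto
  also have "\<dots> \<le> 2 * (\<Sum>s\<in>sign_vectors I. (SUP t\<in>T. \<bar>\<Sum>i\<in>I. s i * u t i\<bar>))"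
    using sum_mono[OF merge, of "sign_vectors I"] by simp
  finally show ?thesis .
qed

lemma cSUP_mult_left_pos:
  fixes f :: "'t \<Rightarrow> real"
  assumes T: "T \<noteq> {}" and b: "bdd_above (f ` T)" and c: "0 < c"
  shows "(SUP t\<in>T. c * f t) = c * (SUP t\<in>T. f t)"
proof (rule antisym)
  show "(SUP t\<in>T. c * f t) \<le> c * (SUP t\<in>T. f t)"
    using T b c by (intro cSUP_least) (auto intro: cSUP_upper)
  obtain B where B: "\<And>t. t \<in> T \<Longrightarrow> f t \<le> B" using b by (auto simp: bdd_above_def)
  have b2: "bdd_above ((\<lambda>t. c * f t) ` T)"
    using B c by (intro bdd_aboveI[of _ "c * B"]) (auto intro: mult_left_mono)
  have "f t \<le> (SUP t\<in>T. c * f t) / c" if "t \<in> T" for t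
    using cSUP_upper[OF that b2] c by (simp add: field_simps)
  then have "(SUP t\<in>T. f t) \<le> (SUP t\<in>T. c * f t) / c"
    using T by (intro cSUP_least) auto
  then show "c * (SUP t\<in>T. f t) \<le> (SUP t\<in>T. c * f t)"
    using c by (simp add: field_simps)
qed

lemma abs_square_diff_le:
  fixes a b :: real
  assumes "\<bar>a\<bar> \<le> K" "\<bar>b\<bar> \<le> K"
  shows "\<bar>a\<^sup>2 - b\<^sup>2\<bar> \<le> 2 * K * \<bar>a - b\<bar>"
proof -
  have "\<bar>a\<^sup>2 - b\<^sup>2\<bar> = \<bar>a + b\<bar> * \<bar>a - b\<bar>"
    by (simp add: power2_eq_square abs_mult[symmetric] algebra_simps)
  also have "\<dots> \<le> 2 * K * \<bar>a - b\<bar>" using assms by (intro mult_right_mono) auto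
  finally show ?thesis .
qed

text \<open>The squares of functions bounded by \<open>K\<close> are \<open>2K\<close>-Lipschitz contractions of the functions.\<close>

lemma sum_sign_vectors_cSUP_squares_contraction:
  fixes \<G> :: "('x \<Rightarrow> real) set" and x :: "nat \<Rightarrow> 'x"
  assumes G: "\<G> \<noteq> {}" and K: "0 < K" and n: "0 < n"
    and supb: "\<And>g x. g \<in> \<G> \<Longrightarrow> \<bar>g x\<bar> \<le> K"
  shows "(\<Sum>s\<in>sign_vectors {..<n}. (SUP g\<in>\<G>. \<bar>(1 / real n) * (\<Sum>i<n. s i * (g (x i))^2)\<bar>))
    \<le> 4 * K * (\<Sum>s\<in>sign_vectors {..<n}. (SUP g\<in>\<G>. \<bar>(1 / real n) * (\<Sum>i<n. g (x i) * s i)\<bar>))"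
proof -
  define \<psi> where "\<psi> g i = (g (x i))^2 / real n" for g :: "'x \<Rightarrow> real" and i
  define u where "u g i = 2 * K * g (x i) / real n" for g :: "'x \<Rightarrow> real" and i
  have \<psi>_u: "\<bar>\<psi> g i\<bar> \<le> \<bar>u g i\<bar>" if g: "g \<in> \<G>" for g i
    using abs_square_diff_le[OF supb[OF g], of 0] K n by (simp add: \<psi>_def u_def abs_mult divide_right_mono)
  have u_le: "\<bar>u g i\<bar> \<le> 2 * K * K / real n" if g: "g \<in> \<G>" for g i
    using supb[OF g, of "x i"] K n by (simp add: u_def abs_mult divide_right_mono)
  have main: "(\<Sum>s\<in>sign_vectors {..<n}. (SUP g\<in>\<G>. \<bar>\<Sum>i\<in>{..<n}. s i * \<psi> g i\<bar>))
       \<le> 2 * (\<Sum>s\<in>sign_vectors {..<n}. (SUP g\<in>\<G>. \<bar>\<Sum>i\<in>{..<n}. s i * u g i\<bar>))"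
  proof (rule sum_sign_vectors_cSUP_abs_contraction[where c = "2 * K * K / real n"])
    fix g g' i assume g: "g \<in> \<G>" "g' \<in> \<G>"
    have "\<bar>\<psi> g i - \<psi> g' i\<bar> = \<bar>(g (x i))\<^sup>2 - (g' (x i))\<^sup>2\<bar> / real n"
      by (simp add: \<psi>_def diff_divide_distrib[symmetric])
    also have "\<dots> \<le> 2 * K * \<bar>g (x i) - g' (x i)\<bar> / real n"
      using abs_square_diff_le[OF supb[OF g(1)] supb[OF g(2)]] n by (simp add: divide_right_mono)
    also have "\<dots> = \<bar>u g i - u g' i\<bar>" using K n
      by (simp add: u_def diff_divide_distrib[symmetric] right_diff_distrib[symmetric] abs_mult)
    finally show "\<bar>\<psi> g i - \<psi> g' i\<bar> \<le> \<bar>u g i - u g' i\<bar>" .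
  qed (use G K n \<psi>_u u_le order_trans[OF \<psi>_u u_le] in auto)
  have bdd: "bdd_above ((\<lambda>g. \<bar>(1 / real n) * (\<Sum>i<n. g (x i) * s i)\<bar>) ` \<G>)"
    if s: "s \<in> sign_vectors {..<n}" for s
  proof (rule bdd_aboveI[of _ K], clarify)
    fix g assume g: "g \<in> \<G>"
    have "\<bar>\<Sum>i<n. s i * g (x i)\<bar> \<le> real (card {..<n}) * K"
      by (rule abs_sum_sign_vector_le[OF s]) (use supb g in auto)
    then show "\<bar>(1 / real n) * (\<Sum>i<n. g (x i) * s i)\<bar> \<le> K"
      using n by (simp add: abs_mult mult_ac field_simps)
  qed
  have u: "(SUP g\<in>\<G>. \<bar>\<Sum>i\<in>{..<n}. s i * u g i\<bar>)
      = 2 * K * (SUP g\<in>\<G>. \<bar>(1 / real n) * (\<Sum>i<n. g (x i) * s i)\<bar>)"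
    if s: "s \<in> sign_vectors {..<n}" for s
  proof -
    have "(\<Sum>i\<in>{..<n}. s i * u g i) = (2 * K) * ((1 / real n) * (\<Sum>i<n. g (x i) * s i))" for g
      by (simp add: u_def sum_distrib_left mult_ac)
    then have "\<bar>\<Sum>i\<in>{..<n}. s i * u g i\<bar> = (2 * K) * \<bar>(1 / real n) * (\<Sum>i<n. g (x i) * s i)\<bar>" for g
      using K by (simp add: abs_mult)
    then show ?thesis using cSUP_mult_left_pos[OF G bdd[OF s], of "2 * K"] K by simp
  qed
  have "(\<Sum>s\<in>sign_vectors {..<n}. (SUP g\<in>\<G>. \<bar>(1 / real n) * (\<Sum>i<n. s i * (g (x i))^2)\<bar>))
      = (\<Sum>s\<in>sign_vectors {..<n}. (SUP g\<in>\<G>. \<bar>\<Sum>i\<in>{..<n}. s i * \<psi> g i\<bar>))"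
    by (simp add: \<psi>_def sum_distrib_left mult_ac)
  then show ?thesis using main by (simp add: u sum_distrib_left mult_ac)
qed

lemma abs_cSUP_le:
  fixes F :: "'t \<Rightarrow> real"
  assumes "T \<noteq> {}" "\<And>t. t \<in> T \<Longrightarrow> \<bar>F t\<bar> \<le> B"
  shows "\<bar>SUP t\<in>T. F t\<bar> \<le> B"
proof -
  obtain t0 where t0: "t0 \<in> T" using assms(1) by auto
  have "bdd_above (F ` T)"
    using assms(2) by (intro bdd_aboveI[of _ B]) (auto simp: abs_le_iff)
  then have "F t0 \<le> (SUP t\<in>T. F t)" by (rule cSUP_upper[OF t0])
  moreover have "(SUP t\<in>T. F t) \<le> B" using assms by (intro cSUP_least) (auto simp: abs_le_iff)
  ultimately show ?thesis using assms(2)[OF t0] by (simp add: abs_le_iff)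
qed

lemma cSUP_upper_abs_bounded:
  fixes F :: "'t \<Rightarrow> real"
  assumes "t \<in> T" "\<And>t. t \<in> T \<Longrightarrow> \<bar>F t\<bar> \<le> B"
  shows "F t \<le> (SUP t\<in>T. F t)"
  using assms by (intro cSUP_upper bdd_aboveI[of _ B]) (auto simp: abs_le_iff)

lemma borel_measurable_cSUP_abs_bounded:
  fixes F :: "'t \<Rightarrow> 'y \<Rightarrow> real"
  assumes "countable T" "\<And>t. t \<in> T \<Longrightarrow> F t \<in> borel_measurable N"
    "\<And>t x. t \<in> T \<Longrightarrow> \<bar>F t x\<bar> \<le> B x"
  shows "(\<lambda>x. SUP t\<in>T. F t x) \<in> borel_measurable N"
proof (rule borel_measurable_cSUP)
  fix x show "bdd_above ((\<lambda>t. F t x) ` T)"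
    using assms(3) by (intro bdd_aboveI[of _ "B x"]) (auto simp: abs_le_iff)
qed (use assms in auto)

lemma (in finite_measure) integrable_abs_bounded:
  fixes f :: "'a \<Rightarrow> real"
  assumes "f \<in> borel_measurable M" "\<And>x. x \<in> space M \<Longrightarrow> \<bar>f x\<bar> \<le> B"
  shows "integrable M f"
  using assms by (intro integrable_const_bound[where B=B]) auto

lemma (in prob_space) abs_integral_le_bound:
  fixes f :: "'a \<Rightarrow> real"
  assumes "f \<in> borel_measurable M" "\<And>x. x \<in> space M \<Longrightarrow> \<bar>f x\<bar> \<le> B"
  shows "\<bar>\<integral>x. f x \<partial>M\<bar> \<le> B"
proof -
  have "\<bar>\<integral>x. f x \<partial>M\<bar> \<le> (\<integral>x. \<bar>f x\<bar> \<partial>M)" by simp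
  also have "\<dots> \<le> (\<integral>x. B \<partial>M)"
    using assms by (intro integral_mono) (auto intro!: integrable_abs_bounded[where B=B])
  finally show ?thesis by (simp add: prob_space)
qed

subsection \<open>Symmetrisation\<close>

locale symmetrization =
  fixes Qz :: "'x::euclidean_space measure" and \<G> :: "('x \<Rightarrow> real) set" and n :: nat and K :: real
  assumes prob_space_Qz: "prob_space Qz" and sets_Qz: "sets Qz = sets borel"
    and countable_class: "countable \<G>" and class_nonempty: "\<G> \<noteq> {}"
    and borel_measurable_class: "\<And>g. g \<in> \<G> \<Longrightarrow> g \<in> borel_measurable borel"
    and abs_class_le: "\<And>g x. g \<in> \<G> \<Longrightarrow> \<bar>g x\<bar> \<le> K"
    and K_pos: "0 < K" and n_pos: "0 < n"
begin

abbreviation "Psample \<equiv> PiM {..<n} (\<lambda>_. Qz)"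
abbreviation "Psigns \<equiv> PiM {..<n} (\<lambda>_. rademacher)"
abbreviation "Pghost \<equiv> PiM {..<n} (\<lambda>_. Qz \<Otimes>\<^sub>M Qz)"

definition "sup_empsq x = (SUP g\<in>\<G>. empsq n x g)"
definition "sup_dev x = (SUP g\<in>\<G>. \<bar>empsq n x g - L2sq Qz g\<bar>)"
definition "sup_dev_ghost x b = (SUP g\<in>\<G>. \<bar>empsq n x g - empsq n b g\<bar>)"
definition "sup_dev_ghost_pairs q = sup_dev_ghost (\<lambda>i\<in>{..<n}. fst (q i)) (\<lambda>i\<in>{..<n}. snd (q i))"
definition "sup_signed_sq x s = (SUP g\<in>\<G>. \<bar>(1 / real n) * (\<Sum>i<n. s i * (g (x i))^2)\<bar>)"
definition "sup_rad x s = (SUP g\<in>\<G>. \<bar>(1 / real n) * (\<Sum>i<n. g (x i) * s i)\<bar>)"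

definition "swap_signs s q = (\<lambda>i\<in>{..<n}. if s i = (1::real) then q i else prod.swap (q i))"

lemma prob_space_Psample: "prob_space Psample"
  by (rule prob_space_PiM) (rule prob_space_Qz)

lemma prob_space_Psigns: "prob_space Psigns"
  by (rule prob_space_PiM) (rule prob_space_rademacher)

lemma prob_space_Pghost: "prob_space Pghost"
  by (rule prob_space_PiM) (intro prob_space_pair prob_space_Qz)

lemma borel_measurable_class_Qz [measurable]: "g \<in> \<G> \<Longrightarrow> g \<in> borel_measurable Qz"
  using borel_measurable_class measurable_cong_sets[OF sets_Qz refl] by blast

lemma square_class_le: "g \<in> \<G> \<Longrightarrow> (g x)^2 \<le> K^2"
  using abs_class_le[of g x] by (metis abs_ge_zero power2_abs power_mono)

lemma empsq_bounds: "g \<in> \<G> \<Longrightarrow> 0 \<le> empsq n x g \<and> empsq n x g \<le> K^2"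
proof -
  assume g: "g \<in> \<G>"
  have "(\<Sum>i<n. (g (x i))^2) \<le> (\<Sum>i<n. K^2)" by (intro sum_mono square_class_le g)
  then show ?thesis using n_pos by (auto simp: empsq_def field_simps intro: sum_nonneg)
qed

lemma L2sq_bounds: "g \<in> \<G> \<Longrightarrow> 0 \<le> L2sq Qz g \<and> L2sq Qz g \<le> K^2"
proof -
  assume g: "g \<in> \<G>"
  interpret Q: prob_space Qz by (rule prob_space_Qz)
  have "(\<integral>x. (g x)^2 \<partial>Qz) \<le> (\<integral>x. K^2 \<partial>Qz)"
    using g square_class_le[OF g] by (intro integral_mono Q.integrable_abs_bounded[where B="K^2"]) auto
  then show ?thesis by (auto simp: L2sq_def Q.prob_space)
qed

lemma abs_empsq_diff_le: "g \<in> \<G> \<Longrightarrow> \<bar>empsq n x g - empsq n b g\<bar> \<le> K^2"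
  using empsq_bounds[of g x] empsq_bounds[of g b] by (auto simp: abs_le_iff)

lemma abs_empsq_L2sq_diff_le: "g \<in> \<G> \<Longrightarrow> \<bar>empsq n x g - L2sq Qz g\<bar> \<le> K^2"
  using empsq_bounds[of g x] L2sq_bounds[of g] by (auto simp: abs_le_iff)

lemma abs_signed_sq_le:
  "s \<in> sign_vectors {..<n} \<Longrightarrow> g \<in> \<G> \<Longrightarrow> \<bar>(1 / real n) * (\<Sum>i<n. s i * (g (x i))^2)\<bar> \<le> K^2"
proof -
  assume s: "s \<in> sign_vectors {..<n}" and g: "g \<in> \<G>"
  have "\<bar>\<Sum>i<n. s i * (g (x i))^2\<bar> \<le> real (card {..<n}) * K^2"
    by (rule abs_sum_sign_vector_le[OF s]) (use square_class_le[OF g] in auto)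
  then show ?thesis using n_pos by (simp add: abs_mult field_simps)
qed

lemma abs_rad_le: "g \<in> \<G> \<Longrightarrow> \<bar>(1 / real n) * (\<Sum>i<n. g (x i) * s i)\<bar> \<le> K * (\<Sum>i<n. \<bar>s i\<bar>)"
proof -
  assume g: "g \<in> \<G>"
  have "\<bar>\<Sum>i<n. g (x i) * s i\<bar> \<le> (\<Sum>i<n. \<bar>g (x i) * s i\<bar>)" by (rule sum_abs)
  also have "\<dots> \<le> (\<Sum>i<n. K * \<bar>s i\<bar>)"
    by (intro sum_mono) (simp add: abs_mult mult_right_mono abs_class_le[OF g])
  finally have "\<bar>\<Sum>i<n. g (x i) * s i\<bar> \<le> K * (\<Sum>i<n. \<bar>s i\<bar>)" by (simp add: sum_distrib_left)
  moreover have "\<bar>(1 / real n) * y\<bar> \<le> \<bar>y\<bar>" for y :: real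
    using mult_left_mono[of 1 "real n" "\<bar>y\<bar>"] n_pos by (simp add: abs_mult divide_le_eq)
  ultimately show ?thesis by (meson order_trans)
qed

lemma abs_rad_sign_vector_le:
  "g \<in> \<G> \<Longrightarrow> s \<in> sign_vectors {..<n} \<Longrightarrow> \<bar>(1 / real n) * (\<Sum>i<n. g (x i) * s i)\<bar> \<le> K"
proof -
  assume g: "g \<in> \<G>" and s: "s \<in> sign_vectors {..<n}"
  have "\<bar>\<Sum>i<n. s i * g (x i)\<bar> \<le> real (card {..<n}) * K"
    by (rule abs_sum_sign_vector_le[OF s]) (use abs_class_le[OF g] in auto)
  then show ?thesis using n_pos by (simp add: abs_mult field_simps mult.commute)
qed

lemma sup_empsq_bounds: "0 \<le> sup_empsq x \<and> sup_empsq x \<le> K^2"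
proof -
  obtain g where g: "g \<in> \<G>" using class_nonempty by auto
  have "\<bar>sup_empsq x\<bar> \<le> K^2"
    unfolding sup_empsq_def by (rule abs_cSUP_le) (use class_nonempty empsq_bounds in auto)
  moreover have "empsq n x g \<le> sup_empsq x"
    unfolding sup_empsq_def by (rule cSUP_upper_abs_bounded[OF g]) (use empsq_bounds in auto)
  ultimately show ?thesis using empsq_bounds[OF g, of x] by (simp add: abs_le_iff)
qed

lemma sup_empsq_le_sup_dev:
  assumes "\<And>g. g \<in> \<G> \<Longrightarrow> L2sq Qz g \<le> r"
  shows "sup_empsq x \<le> r + sup_dev x"
  unfolding sup_empsq_def
proof (rule cSUP_least[OF class_nonempty])
  fix g assume g: "g \<in> \<G>"
  have "\<bar>empsq n x g - L2sq Qz g\<bar> \<le> sup_dev x"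
    unfolding sup_dev_def by (rule cSUP_upper_abs_bounded[OF g]) (use abs_empsq_L2sq_diff_le in auto)
  then show "empsq n x g \<le> r + sup_dev x" using assms[OF g] by linarith
qed

lemma abs_sup_dev_le: "\<bar>sup_dev x\<bar> \<le> K^2"
  unfolding sup_dev_def by (rule abs_cSUP_le) (use class_nonempty abs_empsq_L2sq_diff_le in auto)

lemma abs_sup_dev_ghost_le: "\<bar>sup_dev_ghost x b\<bar> \<le> K^2"
  unfolding sup_dev_ghost_def by (rule abs_cSUP_le) (use class_nonempty abs_empsq_diff_le in auto)

lemma abs_sup_signed_sq_le: "s \<in> sign_vectors {..<n} \<Longrightarrow> \<bar>sup_signed_sq x s\<bar> \<le> K^2"
  unfolding sup_signed_sq_def by (rule abs_cSUP_le) (use class_nonempty abs_signed_sq_le in auto)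

lemma abs_sup_rad_le: "s \<in> sign_vectors {..<n} \<Longrightarrow> \<bar>sup_rad x s\<bar> \<le> K"
  unfolding sup_rad_def by (rule abs_cSUP_le) (use class_nonempty abs_rad_sign_vector_le in auto)

lemma borel_measurable_class_component [measurable]:
  "g \<in> \<G> \<Longrightarrow> i \<in> {..<n} \<Longrightarrow> (\<lambda>x. g (x i)) \<in> borel_measurable Psample"
  by measurable

lemma borel_measurable_empsq [measurable]:
  "g \<in> \<G> \<Longrightarrow> f \<in> measurable N Psample \<Longrightarrow> (\<lambda>x. empsq n (f x) g) \<in> borel_measurable N"
  unfolding empsq_def by measurable

lemma borel_measurable_sup_empsq [measurable]:
  "f \<in> measurable N Psample \<Longrightarrow> (\<lambda>x. sup_empsq (f x)) \<in> borel_measurable N"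
  unfolding sup_empsq_def
  by (rule borel_measurable_cSUP_abs_bounded[where B="\<lambda>_. K^2"])
    (auto intro: countable_class simp: empsq_bounds abs_le_iff)

lemma borel_measurable_sup_dev [measurable]:
  "f \<in> measurable N Psample \<Longrightarrow> (\<lambda>x. sup_dev (f x)) \<in> borel_measurable N"
  unfolding sup_dev_def
  by (rule borel_measurable_cSUP_abs_bounded[where B="\<lambda>_. K^2"])
    (auto intro: countable_class abs_empsq_L2sq_diff_le)

lemma borel_measurable_sup_dev_ghost [measurable]:
  "f \<in> measurable N Psample \<Longrightarrow> h \<in> measurable N Psample
    \<Longrightarrow> (\<lambda>x. sup_dev_ghost (f x) (h x)) \<in> borel_measurable N"
  unfolding sup_dev_ghost_def
  by (rule borel_measurable_cSUP_abs_bounded[where B="\<lambda>_. K^2"])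
    (auto intro: countable_class abs_empsq_diff_le)

lemma borel_measurable_sup_signed_sq [measurable]:
  "s \<in> sign_vectors {..<n} \<Longrightarrow> f \<in> measurable N Psample
    \<Longrightarrow> (\<lambda>y. sup_signed_sq (f y) s) \<in> borel_measurable N"
  unfolding sup_signed_sq_def
  by (rule borel_measurable_cSUP_abs_bounded[where B="\<lambda>_. K^2"])
    (use countable_class abs_signed_sq_le in auto)

lemma borel_measurable_sup_rad [measurable]:
  assumes [measurable]: "f \<in> measurable N Psample" and h: "h \<in> measurable N Psigns"
  shows "(\<lambda>y. sup_rad (f y) (h y)) \<in> borel_measurable N"
  unfolding sup_rad_def
proof (rule borel_measurable_cSUP_abs_bounded[where B="\<lambda>y. K * (\<Sum>i<n. \<bar>h y i\<bar>)"])
  have [measurable]: "(\<lambda>y. h y i) \<in> borel_measurable N" if "i \<in> {..<n}" for i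
    using measurable_compose[OF h measurable_component_singleton[OF that]]
      measurable_cong_sets[OF refl sets_rademacher] by blast
  fix g assume [measurable]: "g \<in> \<G>"
  show "(\<lambda>y. \<bar>(1 / real n) * (\<Sum>i<n. g (f y i) * h y i)\<bar>) \<in> borel_measurable N" by measurable
qed (use countable_class abs_rad_le in auto)

lemma borel_measurable_sup_dev_ghost_right [measurable]:
  "(\<lambda>b. sup_dev_ghost x b) \<in> borel_measurable Psample"
  unfolding sup_dev_ghost_def
  by (rule borel_measurable_cSUP_abs_bounded[where B="\<lambda>_. K^2"])
    (auto intro: countable_class abs_empsq_diff_le)

lemma borel_measurable_sup_rad_left [measurable]:
  assumes "s \<in> sign_vectors {..<n}"
  shows "(\<lambda>x. sup_rad x s) \<in> borel_measurable Psample"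
proof -
  have "s \<in> space Psigns" using assms by (auto simp: sign_vectors_def space_PiM PiE_iff)
  then show ?thesis by (intro borel_measurable_sup_rad measurable_ident_sets) auto
qed

lemma borel_measurable_sup_rad_right [measurable]: "(\<lambda>s. sup_rad x s) \<in> borel_measurable Psigns"
  unfolding sup_rad_def
  by (rule borel_measurable_cSUP_abs_bounded[where B="\<lambda>s. K * (\<Sum>i<n. \<bar>s i\<bar>)"])
    (use countable_class abs_rad_le in auto)

lemma empsq_cong: "(\<And>i. i < n \<Longrightarrow> x i = x' i) \<Longrightarrow> empsq n x g = empsq n x' g"
  unfolding empsq_def by (intro arg_cong2[where f="(*)"] sum.cong) auto

lemma sup_empsq_cong: "(\<And>i. i < n \<Longrightarrow> x i = x' i) \<Longrightarrow> sup_empsq x = sup_empsq x'"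
  unfolding sup_empsq_def by (intro SUP_cong refl) (metis empsq_cong)

lemma sup_dev_cong: "(\<And>i. i < n \<Longrightarrow> x i = x' i) \<Longrightarrow> sup_dev x = sup_dev x'"
  unfolding sup_dev_def by (intro SUP_cong refl) (metis empsq_cong)

lemma sup_dev_ghost_cong:
  "(\<And>i. i < n \<Longrightarrow> x i = x' i) \<Longrightarrow> (\<And>i. i < n \<Longrightarrow> b i = b' i)
    \<Longrightarrow> sup_dev_ghost x b = sup_dev_ghost x' b'"
  unfolding sup_dev_ghost_def by (intro SUP_cong refl) (metis empsq_cong)

lemma sup_signed_sq_cong: "(\<And>i. i < n \<Longrightarrow> x i = x' i) \<Longrightarrow> sup_signed_sq x s = sup_signed_sq x' s"
proof -
  assume "\<And>i. i < n \<Longrightarrow> x i = x' i"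
  then have "(\<Sum>i<n. s i * (g (x i))^2) = (\<Sum>i<n. s i * (g (x' i))^2)" for g by (intro sum.cong) auto
  then show ?thesis by (simp add: sup_signed_sq_def)
qed

lemma sup_rad_cong:
  "(\<And>i. i < n \<Longrightarrow> x i = x' i) \<Longrightarrow> (\<And>i. i < n \<Longrightarrow> s i = s' i) \<Longrightarrow> sup_rad x s = sup_rad x' s'"
proof -
  assume "\<And>i. i < n \<Longrightarrow> x i = x' i" "\<And>i. i < n \<Longrightarrow> s i = s' i"
  then have "(\<Sum>i<n. g (x i) * s i) = (\<Sum>i<n. g (x' i) * s' i)" for g by (intro sum.cong) auto
  then show ?thesis by (simp add: sup_rad_def)
qed

lemma measurable_fst_samples [measurable]: "(\<lambda>q. \<lambda>i\<in>{..<n}. fst (q i)) \<in> measurable Pghost Psample"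
  by (rule measurable_restrict) measurable

lemma measurable_snd_samples [measurable]: "(\<lambda>q. \<lambda>i\<in>{..<n}. snd (q i)) \<in> measurable Pghost Psample"
  by (rule measurable_restrict) measurable

lemma borel_measurable_sup_dev_ghost_pairs [measurable]: "sup_dev_ghost_pairs \<in> borel_measurable Pghost"
  unfolding sup_dev_ghost_pairs_def by measurable

lemma L2sq_eq_integral_empsq: "g \<in> \<G> \<Longrightarrow> L2sq Qz g = (\<integral>b. empsq n b g \<partial>Psample)"
proof -
  assume g: "g \<in> \<G>"
  interpret P: prob_space Psample by (rule prob_space_Psample)
  have coord: "(\<integral>b. (g (b i))^2 \<partial>Psample) = L2sq Qz g" if i: "i \<in> {..<n}" for i
  proof -
    have "(\<integral>b. (g (b i))^2 \<partial>Psample) = (\<integral>y. (g y)^2 \<partial>distr Psample Qz (\<lambda>b. b i))"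
      using g i by (subst integral_distr) auto
    also have "distr Psample Qz (\<lambda>b. b i) = Qz"
      using i prob_space_Qz by (intro distr_PiM_component) auto
    finally show ?thesis by (simp add: L2sq_def)
  qed
  have "integrable Psample (\<lambda>b. (g (b i))^2)" if "i \<in> {..<n}" for i
    using g that square_class_le[OF g] by (intro P.integrable_abs_bounded[where B="K^2"]) auto
  then have "(\<integral>b. empsq n b g \<partial>Psample) = (1 / real n) * (\<Sum>i<n. \<integral>b. (g (b i))^2 \<partial>Psample)"
    unfolding empsq_def by (simp add: integral_sum)
  also have "\<dots> = L2sq Qz g" using coord n_pos by simp
  finally show ?thesis by simp
qed

lemma sup_dev_le_integral_ghost: "sup_dev x \<le> (\<integral>b. sup_dev_ghost x b \<partial>Psample)"
proof -
  interpret P: prob_space Psample by (rule prob_space_Psample)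
  have int: "integrable Psample (\<lambda>b. sup_dev_ghost x b)"
    using abs_sup_dev_ghost_le by (intro P.integrable_abs_bounded[where B="K^2"]) auto
  have "\<bar>empsq n x g - L2sq Qz g\<bar> \<le> (\<integral>b. sup_dev_ghost x b \<partial>Psample)" if g: "g \<in> \<G>" for g
  proof -
    have "integrable Psample (\<lambda>b. empsq n b g)"
      using g empsq_bounds[OF g] by (intro P.integrable_abs_bounded[where B="K^2"]) auto
    then have "empsq n x g - L2sq Qz g = (\<integral>b. empsq n x g - empsq n b g \<partial>Psample)"
      by (simp add: L2sq_eq_integral_empsq[OF g] P.prob_space)
    then have "\<bar>empsq n x g - L2sq Qz g\<bar> \<le> (\<integral>b. \<bar>empsq n x g - empsq n b g\<bar> \<partial>Psample)"
      by (simp add: integral_abs_bound)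
    also have "\<dots> \<le> (\<integral>b. sup_dev_ghost x b \<partial>Psample)"
    proof (rule integral_mono[OF _ int])
      show "integrable Psample (\<lambda>b. \<bar>empsq n x g - empsq n b g\<bar>)"
        using g abs_empsq_diff_le by (intro P.integrable_abs_bounded[where B="K^2"]) auto
      show "\<bar>empsq n x g - empsq n b g\<bar> \<le> sup_dev_ghost x b" for b
        unfolding sup_dev_ghost_def
        by (rule cSUP_upper_abs_bounded[OF g]) (use abs_empsq_diff_le in auto)
    qed
    finally show ?thesis .
  qed
  then show ?thesis unfolding sup_dev_def using class_nonempty by (intro cSUP_least) auto
qed

lemma integral_sup_dev_le_ghost: "(\<integral>x. sup_dev x \<partial>Psample) \<le> (\<integral>q. sup_dev_ghost_pairs q \<partial>Pghost)"
proof -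
  interpret P: prob_space Psample by (rule prob_space_Psample)
  interpret PP: pair_prob_space Psample Psample by unfold_locales
  let ?zip = "\<lambda>p. \<lambda>i\<in>{..<n}. (fst p i, snd p i)"
  have zip[measurable]: "?zip \<in> measurable (Psample \<Otimes>\<^sub>M Psample) Pghost"
    by (rule measurable_restrict) measurable
  have int: "integrable Psample (\<lambda>x. \<integral>b. sup_dev_ghost x b \<partial>Psample)"
    by (rule P.integrable_abs_bounded[where B="K^2"]) (auto intro: P.abs_integral_le_bound abs_sup_dev_ghost_le)
  have "(\<integral>x. sup_dev x \<partial>Psample) \<le> (\<integral>x. (\<integral>b. sup_dev_ghost x b \<partial>Psample) \<partial>Psample)"
    by (rule integral_mono[OF P.integrable_abs_bounded[where B="K^2"] int sup_dev_le_integral_ghost])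
      (auto intro: abs_sup_dev_le)
  also have "\<dots> = (\<integral>p. sup_dev_ghost (fst p) (snd p) \<partial>(Psample \<Otimes>\<^sub>M Psample))"
    using PP.integral_fst'[of "\<lambda>p. sup_dev_ghost (fst p) (snd p)"]
    by (simp add: PP.integrable_abs_bounded[where B="K^2"] abs_sup_dev_ghost_le)
  also have "\<dots> = (\<integral>p. sup_dev_ghost_pairs (?zip p) \<partial>(Psample \<Otimes>\<^sub>M Psample))"
    by (intro Bochner_Integration.integral_cong refl)
      (auto simp: sup_dev_ghost_pairs_def intro!: sup_dev_ghost_cong)
  also have "\<dots> = (\<integral>q. sup_dev_ghost_pairs q \<partial>distr (Psample \<Otimes>\<^sub>M Psample) Pghost ?zip)"
    by (rule integral_distr[symmetric]) measurable
  also have "\<dots> = (\<integral>q. sup_dev_ghost_pairs q \<partial>Pghost)"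
    by (subst distr_PiM_zip) (auto intro: prob_space_Qz)
  finally show ?thesis .
qed

lemma measurable_swap_signs [measurable]: "swap_signs s \<in> measurable Pghost Pghost"
  unfolding swap_signs_def
proof (rule measurable_restrict)
  fix i assume "i \<in> {..<n}"
  have swap: "prod.swap = (\<lambda>p. (snd p, fst p))" by (auto simp: fun_eq_iff)
  show "(\<lambda>q. if s i = 1 then q i else prod.swap (q i)) \<in> measurable Pghost (Qz \<Otimes>\<^sub>M Qz)"
    unfolding swap using \<open>i \<in> {..<n}\<close> by measurable
qed

lemma integral_swap_signs:
  assumes Fm: "F \<in> borel_measurable Pghost"
  shows "(\<integral>q. F (swap_signs s q) \<partial>Pghost) = (\<integral>q. (F q :: real) \<partial>Pghost)"
proof -
  interpret PQ: pair_sigma_finite Qz Qz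
    using prob_space_Qz by (simp add: pair_sigma_finite_def prob_space_imp_sigma_finite)
  have swap: "prod.swap = (\<lambda>(x, y). (y, x))" by (auto simp: fun_eq_iff)
  have fm: "(\<lambda>p. if s i = 1 then p else prod.swap p) \<in> measurable (Qz \<Otimes>\<^sub>M Qz) (Qz \<Otimes>\<^sub>M Qz)" for i
    unfolding swap by (cases "s i = 1") auto
  have fd: "distr (Qz \<Otimes>\<^sub>M Qz) (Qz \<Otimes>\<^sub>M Qz) (\<lambda>p. if s i = 1 then p else prod.swap p) = Qz \<Otimes>\<^sub>M Qz" for i
    unfolding swap using PQ.distr_pair_swap by (cases "s i = 1") simp_all
  have "distr Pghost Pghost (swap_signs s) = Pghost"
    unfolding swap_signs_def
    using distr_PiM_coordinatewise[OF _ prob_space_pair[OF prob_space_Qz prob_space_Qz],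
        of "{..<n}" "\<lambda>i p. if s i = 1 then p else prod.swap p"] fm fd
    by simp
  then have "(\<integral>q. F q \<partial>Pghost) = (\<integral>q. F q \<partial>distr Pghost Pghost (swap_signs s))" by simp
  also have "\<dots> = (\<integral>q. F (swap_signs s q) \<partial>Pghost)" by (rule integral_distr[OF _ Fm]) measurable
  finally show ?thesis by simp
qed

lemma integral_sup_signed_sq_fst:
  assumes s: "s \<in> sign_vectors {..<n}"
  shows "(\<integral>q. sup_signed_sq (\<lambda>i\<in>{..<n}. fst (q i)) s \<partial>Pghost) = (\<integral>x. sup_signed_sq x s \<partial>Psample)"
proof -
  interpret Q: prob_space Qz by (rule prob_space_Qz)
  have "distr Pghost Psample (compose {..<n} fst) = PiM {..<n} (\<lambda>i. distr (Qz \<Otimes>\<^sub>M Qz) Qz fst)"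
    by (rule distr_PiM_finite_prob_space') (auto intro: prob_space_pair prob_space_Qz)
  also have "\<dots> = Psample" by (simp add: Q.distr_pair_fst)
  also have "compose {..<n} fst = (\<lambda>q. \<lambda>i\<in>{..<n}. fst (q i))" by (simp add: fun_eq_iff compose_def)
  finally have D: "distr Pghost Psample (\<lambda>q. \<lambda>i\<in>{..<n}. fst (q i)) = Psample" .
  show ?thesis
    by (subst D[symmetric], rule integral_distr[symmetric]) (use s in measurable)
qed

lemma sup_dev_ghost_pairs_swap_signs_le:
  assumes s: "s \<in> sign_vectors {..<n}"
  shows "sup_dev_ghost_pairs (swap_signs s q)
       \<le> sup_signed_sq (\<lambda>i\<in>{..<n}. fst (q i)) s + sup_signed_sq (\<lambda>i\<in>{..<n}. snd (q i)) s"
proof -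
  let ?x = "\<lambda>i\<in>{..<n}. fst (q i)" and ?b = "\<lambda>i\<in>{..<n}. snd (q i)"
  let ?sq = "\<lambda>g x. (1 / real n) * (\<Sum>i<n. s i * (g (x i))^2)"
  have swap_term: "(g (fst (swap_signs s q i)))^2 - (g (snd (swap_signs s q i)))^2
      = s i * (g (?x i))^2 - s i * (g (?b i))^2" if i: "i < n" for g i
  proof -
    have "s i = -1 \<or> s i = 1" using s i by (auto simp: sign_vectors_def PiE_iff)
    then show ?thesis using i by (auto simp: swap_signs_def prod.swap_def)
  qed
  have "\<bar>empsq n (\<lambda>i\<in>{..<n}. fst (swap_signs s q i)) g - empsq n (\<lambda>i\<in>{..<n}. snd (swap_signs s q i)) g\<bar>
     \<le> sup_signed_sq ?x s + sup_signed_sq ?b s" if g: "g \<in> \<G>" for g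
  proof -
    have "empsq n (\<lambda>i\<in>{..<n}. fst (swap_signs s q i)) g - empsq n (\<lambda>i\<in>{..<n}. snd (swap_signs s q i)) g
      = (1 / real n) * (\<Sum>i<n. (g (fst (swap_signs s q i)))^2 - (g (snd (swap_signs s q i)))^2)"
      by (simp add: empsq_def sum_subtractf right_diff_distrib)
    also have "\<dots> = ?sq g ?x - ?sq g ?b"
      by (simp add: swap_term sum_subtractf right_diff_distrib)
    finally have eq: "empsq n (\<lambda>i\<in>{..<n}. fst (swap_signs s q i)) g
        - empsq n (\<lambda>i\<in>{..<n}. snd (swap_signs s q i)) g = ?sq g ?x - ?sq g ?b" .
    have "\<bar>?sq g x\<bar> \<le> sup_signed_sq x s" for x
      unfolding sup_signed_sq_def
      by (rule cSUP_upper_abs_bounded[where F="\<lambda>g. \<bar>?sq g x\<bar>", OF g]) (use abs_signed_sq_le[OF s] in auto)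
    from this[of ?x] this[of ?b] show ?thesis unfolding eq by linarith
  qed
  then show ?thesis
    unfolding sup_dev_ghost_pairs_def sup_dev_ghost_def using class_nonempty by (auto intro!: cSUP_least)
qed

text \<open>Swapping sample and ghost copy is measure preserving, so the ghost deviation can be signed.\<close>

lemma integral_ghost_le_signed_sq:
  assumes s: "s \<in> sign_vectors {..<n}"
  shows "(\<integral>q. sup_dev_ghost_pairs q \<partial>Pghost) \<le> 2 * (\<integral>x. sup_signed_sq x s \<partial>Psample)"
proof -
  interpret PG: prob_space Pghost by (rule prob_space_Pghost)
  let ?fst = "\<lambda>q. sup_signed_sq (\<lambda>i\<in>{..<n}. fst (q i)) s"
  let ?snd = "\<lambda>q. sup_signed_sq (\<lambda>i\<in>{..<n}. snd (q i)) s"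
  have [measurable]: "?fst \<in> borel_measurable Pghost" "?snd \<in> borel_measurable Pghost"
    using s by measurable
  have int: "integrable Pghost ?fst" "integrable Pghost ?snd"
    by (rule PG.integrable_abs_bounded[where B="K^2"]; use s abs_sup_signed_sq_le in simp)+
  have "(\<integral>q. sup_dev_ghost_pairs q \<partial>Pghost) = (\<integral>q. sup_dev_ghost_pairs (swap_signs s q) \<partial>Pghost)"
    by (rule integral_swap_signs[symmetric]) measurable
  also have "\<dots> \<le> (\<integral>q. ?fst q + ?snd q \<partial>Pghost)"
  proof (rule integral_mono)
    show "integrable Pghost (\<lambda>q. sup_dev_ghost_pairs (swap_signs s q))"
      by (rule PG.integrable_abs_bounded[where B="K^2"])
        (auto simp: sup_dev_ghost_pairs_def intro: abs_sup_dev_ghost_le)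
  qed (use int sup_dev_ghost_pairs_swap_signs_le[OF s] in auto)
  also have "\<dots> = (\<integral>q. ?fst q \<partial>Pghost) + (\<integral>q. ?snd q \<partial>Pghost)"
    using int by simp
  also have "(\<integral>q. ?snd q \<partial>Pghost) = (\<integral>q. ?fst (swap_signs (\<lambda>_. -1) q) \<partial>Pghost)"
    by (intro Bochner_Integration.integral_cong refl sup_signed_sq_cong)
      (auto simp: swap_signs_def prod.swap_def)
  also have "\<dots> = (\<integral>q. ?fst q \<partial>Pghost)"
    by (rule integral_swap_signs) measurable
  finally show ?thesis using integral_sup_signed_sq_fst[OF s] by linarith
qed

lemma integral_sup_dev_le_signed_sq:
  "(\<integral>x. sup_dev x \<partial>Psample)
    \<le> 2 / 2 ^ n * (\<integral>x. (\<Sum>s\<in>sign_vectors {..<n}. sup_signed_sq x s) \<partial>Psample)"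
proof -
  interpret P: prob_space Psample by (rule prob_space_Psample)
  have int: "integrable Psample (\<lambda>x. sup_signed_sq x s)" if "s \<in> sign_vectors {..<n}" for s
    by (rule P.integrable_abs_bounded[where B="K^2"]) (use that abs_sup_signed_sq_le in auto)
  have "2 ^ n * (\<integral>x. sup_dev x \<partial>Psample)
      \<le> (\<Sum>s\<in>sign_vectors {..<n}. (\<integral>q. sup_dev_ghost_pairs q \<partial>Pghost))"
    using integral_sup_dev_le_ghost by (simp add: card_sign_vectors)
  also have "\<dots> \<le> (\<Sum>s\<in>sign_vectors {..<n}. 2 * (\<integral>x. sup_signed_sq x s \<partial>Psample))"
    by (intro sum_mono integral_ghost_le_signed_sq)
  also have "\<dots> = 2 * (\<integral>x. (\<Sum>s\<in>sign_vectors {..<n}. sup_signed_sq x s) \<partial>Psample)"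
    using int by (simp add: sum_distrib_left)
  finally show ?thesis by (simp add: field_simps)
qed

lemma AE_sign_vectors: "AE p in Psample \<Otimes>\<^sub>M Psigns. snd p \<in> sign_vectors {..<n}"
proof -
  interpret PS: pair_sigma_finite Psample Psigns
    using prob_space_Psample prob_space_Psigns
    by (simp add: pair_sigma_finite_def prob_space_imp_sigma_finite)
  have "AE s in Psigns. \<forall>i\<in>{..<n}. s i \<in> {-1, 1}"
    by (intro eventually_ball_finite ballI AE_PiM_component AE_rademacher prob_space_rademacher) auto
  then have "AE p in Psample \<Otimes>\<^sub>M Psigns. \<forall>i\<in>{..<n}. snd p i \<in> {-1, 1}"
    by (intro PS.AE_pair_measure) (auto simp: sign_vectors_def PiE_iff)
  then show ?thesis
    by (rule AE_mp) (auto intro!: AE_I2 simp: sign_vectors_def space_pair_measure space_PiM PiE_iff)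
qed

lemma integral_sum_sup_rad:
  "(\<integral>x. (\<Sum>s\<in>sign_vectors {..<n}. sup_rad x s) \<partial>Psample)
    = 2 ^ n * (\<integral>p. sup_rad (fst p) (snd p) \<partial>(Psample \<Otimes>\<^sub>M Psigns))"
proof -
  interpret P: prob_space Psample by (rule prob_space_Psample)
  interpret PE: prob_space Psigns by (rule prob_space_Psigns)
  interpret PP: pair_prob_space Psample Psigns by unfold_locales
  have int: "integrable (Psample \<Otimes>\<^sub>M Psigns) (\<lambda>p. sup_rad (fst p) (snd p))"
  proof (rule PP.integrable_const_bound[where B=K])
    show "AE p in Psample \<Otimes>\<^sub>M Psigns. norm (sup_rad (fst p) (snd p)) \<le> K"
      using AE_sign_vectors by eventually_elim (simp add: abs_sup_rad_le)
  qed measurable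
  have "(\<integral>p. sup_rad (fst p) (snd p) \<partial>(Psample \<Otimes>\<^sub>M Psigns))
      = (\<integral>x. (\<integral>s. sup_rad x s \<partial>Psigns) \<partial>Psample)"
    using PP.integral_fst'[OF int, symmetric] by (simp only: fst_conv snd_conv)
  also have "\<dots> = (\<integral>x. (\<Sum>s\<in>sign_vectors {..<n}. sup_rad x s) / 2 ^ n \<partial>Psample)"
    by (intro Bochner_Integration.integral_cong refl)
      (simp add: integral_PiM_rademacher)
  finally show ?thesis by simp
qed

lemma integral_sup_dev_le_rademacher:
  "(\<integral>x. sup_dev x \<partial>Psample) \<le> 8 * K * (\<integral>p. sup_rad (fst p) (snd p) \<partial>(Psample \<Otimes>\<^sub>M Psigns))"
proof -
  interpret P: prob_space Psample by (rule prob_space_Psample)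
  have int_rad: "integrable Psample (\<lambda>x. \<Sum>s\<in>sign_vectors {..<n}. sup_rad x s)"
    by (intro Bochner_Integration.integrable_sum P.integrable_abs_bounded[where B=K])
      (auto simp: abs_sup_rad_le)
  have int_sq: "integrable Psample (\<lambda>x. \<Sum>s\<in>sign_vectors {..<n}. sup_signed_sq x s)"
    by (intro Bochner_Integration.integrable_sum P.integrable_abs_bounded[where B="K^2"])
      (auto simp: abs_sup_signed_sq_le)
  have "(\<Sum>s\<in>sign_vectors {..<n}. sup_signed_sq x s) \<le> 4 * K * (\<Sum>s\<in>sign_vectors {..<n}. sup_rad x s)"
    for x unfolding sup_signed_sq_def sup_rad_def
    by (rule sum_sign_vectors_cSUP_squares_contraction[OF class_nonempty K_pos n_pos]) (fact abs_class_le)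
  then have "(\<integral>x. (\<Sum>s\<in>sign_vectors {..<n}. sup_signed_sq x s) \<partial>Psample)
      \<le> (\<integral>x. 4 * K * (\<Sum>s\<in>sign_vectors {..<n}. sup_rad x s) \<partial>Psample)"
    using int_rad int_sq by (intro integral_mono) auto
  also have "\<dots> = 4 * K * 2 ^ n * (\<integral>p. sup_rad (fst p) (snd p) \<partial>(Psample \<Otimes>\<^sub>M Psigns))"
    by (simp add: integral_sum_sup_rad)
  finally have signed_sq: "(\<integral>x. (\<Sum>s\<in>sign_vectors {..<n}. sup_signed_sq x s) \<partial>Psample)
      \<le> 4 * K * 2 ^ n * (\<integral>p. sup_rad (fst p) (snd p) \<partial>(Psample \<Otimes>\<^sub>M Psigns))" .
  have "(\<integral>x. sup_dev x \<partial>Psample)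
      \<le> 2 / 2 ^ n * (\<integral>x. (\<Sum>s\<in>sign_vectors {..<n}. sup_signed_sq x s) \<partial>Psample)"
    by (rule integral_sup_dev_le_signed_sq)
  also have "\<dots> \<le> 2 / 2 ^ n * (4 * K * 2 ^ n * (\<integral>p. sup_rad (fst p) (snd p) \<partial>(Psample \<Otimes>\<^sub>M Psigns)))"
    using signed_sq by (intro mult_left_mono) auto
  finally show ?thesis by simp
qed

end

subsection \<open>Transfer to the given sample\<close>

locale rademacher_sample = symmetrization Qz \<G> n K
  for Qz :: "'x::euclidean_space measure" and \<G> n K +
  fixes M :: "'a measure" and z :: "nat \<Rightarrow> 'a \<Rightarrow> 'x" and eps :: "nat \<Rightarrow> 'a \<Rightarrow> real"
  assumes prob_space_M: "prob_space M"
    and measurable_pairs: "\<And>i. i < n \<Longrightarrow> (\<lambda>\<omega>. (z i \<omega>, eps i \<omega>)) \<in> borel_measurable M"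
    and indep_pairs: "prob_space.indep_vars M (\<lambda>_. borel) (\<lambda>i \<omega>. (z i \<omega>, eps i \<omega>)) {..<n}"
    and distr_pairs: "\<And>i. i < n \<Longrightarrow> distr M (Qz \<Otimes>\<^sub>M rademacher) (\<lambda>\<omega>. (z i \<omega>, eps i \<omega>)) = Qz \<Otimes>\<^sub>M rademacher"
begin

abbreviation "Ppairs \<equiv> PiM {..<n} (\<lambda>_. Qz \<Otimes>\<^sub>M rademacher)"
abbreviation "pairs \<equiv> \<lambda>\<omega>. \<lambda>i\<in>{..<n}. (z i \<omega>, eps i \<omega>)"

lemma sets_Qz_rademacher: "sets (Qz \<Otimes>\<^sub>M rademacher) = sets (borel :: ('x \<times> real) measure)"
proof -
  have "sets (Qz \<Otimes>\<^sub>M rademacher) = sets ((borel :: 'x measure) \<Otimes>\<^sub>M (borel :: real measure))"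
    by (rule sets_pair_measure_cong) (simp_all add: sets_Qz)
  also have "\<dots> = sets (borel :: ('x \<times> real) measure)" by (rule arg_cong[where f=sets, OF borel_prod])
  finally show ?thesis .
qed

lemma measurable_pairs_PiM: "pairs \<in> measurable M Ppairs"
proof (rule measurable_restrict)
  fix i assume "i \<in> {..<n}"
  then show "(\<lambda>\<omega>. (z i \<omega>, eps i \<omega>)) \<in> measurable M (Qz \<Otimes>\<^sub>M rademacher)"
    using measurable_pairs[of i] measurable_cong_sets[OF refl sets_Qz_rademacher] by auto
qed

lemma measurable_sample [measurable]: "(\<lambda>\<omega>. \<lambda>i\<in>{..<n}. z i \<omega>) \<in> measurable M Psample"
proof (rule measurable_restrict)
  fix i assume "i \<in> {..<n}"
  then have "(\<lambda>\<omega>. fst (pairs \<omega> i)) \<in> measurable M Qz"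
    using measurable_pairs_PiM by measurable
  then show "(\<lambda>\<omega>. z i \<omega>) \<in> measurable M Qz" using \<open>i \<in> {..<n}\<close> by simp
qed

lemma distr_pairs_PiM: "distr M Ppairs pairs = Ppairs"
proof -
  interpret prob_space M by (rule prob_space_M)
  have "distr M Ppairs pairs = distr M (PiM {..<n} (\<lambda>_. borel)) pairs"
    by (rule distr_cong[OF refl sets_PiM_cong[OF refl sets_Qz_rademacher]]) simp
  also have "\<dots> = PiM {..<n} (\<lambda>i. distr M borel (\<lambda>\<omega>. (z i \<omega>, eps i \<omega>)))"
    using indep_vars_iff_distr_eq_PiM'[where I="{..<n}" and M'="\<lambda>_. borel" and X="\<lambda>i \<omega>. (z i \<omega>, eps i \<omega>)"]
      n_pos measurable_pairs indep_pairs by auto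
  also have "\<dots> = Ppairs"
  proof (rule PiM_cong[OF refl])
    fix i assume "i \<in> {..<n}"
    then show "distr M borel (\<lambda>\<omega>. (z i \<omega>, eps i \<omega>)) = Qz \<Otimes>\<^sub>M rademacher"
      using distr_pairs[of i] distr_cong[OF refl sets_Qz_rademacher[symmetric], of M] by simp
  qed
  finally show ?thesis .
qed

lemma integral_pairs:
  fixes F :: "_ \<Rightarrow> real"
  assumes Fm: "F \<in> borel_measurable Ppairs"
  shows "(\<integral>\<omega>. F (pairs \<omega>) \<partial>M) = (\<integral>p. F (\<lambda>i\<in>{..<n}. (fst p i, snd p i)) \<partial>(Psample \<Otimes>\<^sub>M Psigns))"
proof -
  let ?zip = "\<lambda>p. \<lambda>i\<in>{..<n}. (fst p i, snd p i)"
  have zip: "?zip \<in> measurable (Psample \<Otimes>\<^sub>M Psigns) Ppairs"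
    by (rule measurable_restrict) measurable
  have "(\<integral>\<omega>. F (pairs \<omega>) \<partial>M) = (\<integral>x. F x \<partial>distr M Ppairs pairs)"
    by (rule integral_distr[symmetric, OF measurable_pairs_PiM Fm])
  also have "\<dots> = (\<integral>x. F x \<partial>distr (Psample \<Otimes>\<^sub>M Psigns) Ppairs ?zip)"
    by (simp only: distr_pairs_PiM distr_PiM_zip[OF _ prob_space_Qz prob_space_rademacher] finite_lessThan)
  also have "\<dots> = (\<integral>p. F (?zip p) \<partial>(Psample \<Otimes>\<^sub>M Psigns))"
    by (rule integral_distr[OF zip Fm])
  finally show ?thesis .
qed

lemma integral_sup_dev_pairs: "(\<integral>\<omega>. sup_dev (\<lambda>i. z i \<omega>) \<partial>M) = (\<integral>x. sup_dev x \<partial>Psample)"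
proof -
  interpret PE: prob_space Psigns by (rule prob_space_Psigns)
  have fst_m[measurable]: "(\<lambda>w. \<lambda>i\<in>{..<n}. fst (w i)) \<in> measurable Ppairs Psample"
    by (rule measurable_restrict) measurable
  have "(\<integral>\<omega>. sup_dev (\<lambda>i. z i \<omega>) \<partial>M) = (\<integral>\<omega>. sup_dev (\<lambda>i\<in>{..<n}. fst (pairs \<omega> i)) \<partial>M)"
    by (intro Bochner_Integration.integral_cong refl sup_dev_cong) auto
  also have "\<dots> = (\<integral>p. sup_dev (fst p) \<partial>(Psample \<Otimes>\<^sub>M Psigns))"
    by (subst integral_pairs) (auto intro!: Bochner_Integration.integral_cong sup_dev_cong)
  also have "\<dots> = (\<integral>x. sup_dev x \<partial>distr (Psample \<Otimes>\<^sub>M Psigns) Psample fst)"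
    by (rule integral_distr[symmetric]) measurable
  also have "\<dots> = (\<integral>x. sup_dev x \<partial>Psample)" by (simp only: PE.distr_pair_fst)
  finally show ?thesis .
qed

lemma integral_sup_rad_pairs:
  "(\<integral>\<omega>. sup_rad (\<lambda>i. z i \<omega>) (\<lambda>i. eps i \<omega>) \<partial>M)
    = (\<integral>p. sup_rad (fst p) (snd p) \<partial>(Psample \<Otimes>\<^sub>M Psigns))"
proof -
  have [measurable]: "(\<lambda>w. \<lambda>i\<in>{..<n}. fst (w i)) \<in> measurable Ppairs Psample"
    "(\<lambda>w. \<lambda>i\<in>{..<n}. snd (w i)) \<in> measurable Ppairs Psigns"
    by (rule measurable_restrict, measurable)+
  have "(\<integral>\<omega>. sup_rad (\<lambda>i. z i \<omega>) (\<lambda>i. eps i \<omega>) \<partial>M)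
      = (\<integral>\<omega>. sup_rad (\<lambda>i\<in>{..<n}. fst (pairs \<omega> i)) (\<lambda>i\<in>{..<n}. snd (pairs \<omega> i)) \<partial>M)"
    by (intro Bochner_Integration.integral_cong refl sup_rad_cong) auto
  also have "\<dots> = (\<integral>p. sup_rad (fst p) (snd p) \<partial>(Psample \<Otimes>\<^sub>M Psigns))"
    by (subst integral_pairs) (auto intro!: Bochner_Integration.integral_cong sup_rad_cong)
  finally show ?thesis .
qed

lemma integral_sup_dev_le_rademacher_pairs:
  "(\<integral>\<omega>. sup_dev (\<lambda>i. z i \<omega>) \<partial>M) \<le> 8 * K * (\<integral>\<omega>. sup_rad (\<lambda>i. z i \<omega>) (\<lambda>i. eps i \<omega>) \<partial>M)"
  unfolding integral_sup_dev_pairs integral_sup_rad_pairs by (rule integral_sup_dev_le_rademacher)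

lemma integral_sup_empsq_le:
  assumes "\<And>g. g \<in> \<G> \<Longrightarrow> L2sq Qz g \<le> r"
  shows "(\<integral>\<omega>. sup_empsq (\<lambda>i. z i \<omega>) \<partial>M) \<le> r + (\<integral>\<omega>. sup_dev (\<lambda>i. z i \<omega>) \<partial>M)"
proof -
  interpret prob_space M by (rule prob_space_M)
  have sup_empsq_eq: "sup_empsq (\<lambda>i. z i \<omega>) = sup_empsq (\<lambda>i\<in>{..<n}. z i \<omega>)" for \<omega>
    by (rule sup_empsq_cong) simp
  have sup_dev_eq: "sup_dev (\<lambda>i. z i \<omega>) = sup_dev (\<lambda>i\<in>{..<n}. z i \<omega>)" for \<omega>
    by (rule sup_dev_cong) simp
  have int: "integrable M (\<lambda>\<omega>. sup_empsq (\<lambda>i. z i \<omega>))" "integrable M (\<lambda>\<omega>. sup_dev (\<lambda>i. z i \<omega>))"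
    unfolding sup_empsq_eq sup_dev_eq
    by (rule integrable_abs_bounded[where B="K^2"]; simp add: sup_empsq_bounds abs_sup_dev_le)+
  then have "(\<integral>\<omega>. sup_empsq (\<lambda>i. z i \<omega>) \<partial>M) \<le> (\<integral>\<omega>. r + sup_dev (\<lambda>i. z i \<omega>) \<partial>M)"
    by (intro integral_mono) (auto intro: sup_empsq_le_sup_dev assms)
  then show ?thesis using int by (simp add: prob_space)
qed

end

subsection \<open>Convexity, inverses and the convex conjugate\<close>

lemma convex_on_if_strict_convex_on:
  fixes f :: "real \<Rightarrow> real"
  assumes "strict_convex_on S f" "convex S"
  shows "convex_on S f"
proof (rule convex_onI[OF _ assms(2)])
  fix t x y :: real assume t: "0 < t" "t < 1" and xy: "x \<in> S" "y \<in> S"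
  show "f ((1 - t) *\<^sub>R x + t *\<^sub>R y) \<le> (1 - t) * f x + t * f y"
  proof (cases "x = y")
    case True
    then show ?thesis by (simp add: algebra_simps)
  next
    case False
    then have "f ((1 - t) * x + t * y) < (1 - t) * f x + t * f y"
      using assms(1) t xy unfolding strict_convex_on_def by blast
    then show ?thesis by simp
  qed
qed

text \<open>Jensen's inequality is only available on open intervals, hence the even extension of \<open>G\<close>.\<close>

lemma convex_on_comp_abs:
  fixes G :: "real \<Rightarrow> real"
  assumes mono: "mono_on {0..} G" and convex: "convex_on {0..} G"
  shows "convex_on UNIV (\<lambda>u. G \<bar>u\<bar>)"
proof (rule convex_onI)
  fix t x y :: real assume t: "0 < t" "t < 1"
  have "\<bar>(1 - t) *\<^sub>R x + t *\<^sub>R y\<bar> \<le> (1 - t) * \<bar>x\<bar> + t * \<bar>y\<bar>"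
    using t by (simp add: abs_triangle_ineq[THEN order_trans] abs_mult)
  then have "G \<bar>(1 - t) *\<^sub>R x + t *\<^sub>R y\<bar> \<le> G ((1 - t) * \<bar>x\<bar> + t * \<bar>y\<bar>)"
    using t by (intro mono_onD[OF mono]) auto
  also have "\<dots> \<le> (1 - t) * G \<bar>x\<bar> + t * G \<bar>y\<bar>"
    using convex_onD[OF convex, of t "\<bar>x\<bar>" "\<bar>y\<bar>"] t by simp
  finally show "G \<bar>(1 - t) *\<^sub>R x + t *\<^sub>R y\<bar> \<le> (1 - t) * G \<bar>x\<bar> + t * G \<bar>y\<bar>" .
qed simp

context
  fixes G :: "real \<Rightarrow> real"
  assumes strict_mono: "strict_mono_on {0..} G" and bij: "bij_betw G {0..} {0..}"
begin

lemma inv_into_atLeast_nonneg: "0 \<le> y \<Longrightarrow> 0 \<le> inv_into {0..} G y"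
  using bij by (metis atLeast_iff bij_betw_def inv_into_into)

lemma f_inv_into_atLeast: "0 \<le> y \<Longrightarrow> G (inv_into {0..} G y) = y"
  using bij by (metis atLeast_iff bij_betw_def f_inv_into_f)

lemma le_inv_into_atLeast:
  assumes "0 \<le> x" "0 \<le> y" "G x \<le> y"
  shows "x \<le> inv_into {0..} G y"
proof (rule ccontr)
  assume "\<not> x \<le> inv_into {0..} G y"
  then have "G (inv_into {0..} G y) < G x"
    using strict_mono inv_into_atLeast_nonneg[OF assms(2)] assms(1) by (auto simp: strict_mono_on_def)
  then show False using f_inv_into_atLeast[OF assms(2)] assms(3) by simp
qed

lemma inv_into_atLeast_mono: "0 \<le> a \<Longrightarrow> a \<le> b \<Longrightarrow> inv_into {0..} G a \<le> inv_into {0..} G b"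
  using le_inv_into_atLeast[of "inv_into {0..} G a" b] inv_into_atLeast_nonneg f_inv_into_atLeast by simp

lemma jensen_inv_into:
  assumes "prob_space M" and "convex_on {0..} G"
    and Ym: "Y \<in> borel_measurable M" and Y: "\<And>\<omega>. \<omega> \<in> space M \<Longrightarrow> 0 \<le> Y \<omega> \<and> Y \<omega> \<le> B"
  shows "G (\<integral>\<omega>. inv_into {0..} G (Y \<omega>) \<partial>M) \<le> (\<integral>\<omega>. Y \<omega> \<partial>M)"
proof -
  interpret prob_space M by fact
  let ?X = "\<lambda>\<omega>. inv_into {0..} G (Y \<omega>)"
  have "mono (\<lambda>y. inv_into {0..} G (max 0 y))"
    by (intro monoI inv_into_atLeast_mono) auto
  then have "(\<lambda>\<omega>. inv_into {0..} G (max 0 (Y \<omega>))) \<in> borel_measurable M"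
    using Ym by (intro measurable_compose[OF Ym] borel_measurable_mono)
  then have Xm: "?X \<in> borel_measurable M"
    by (rule measurable_cong[THEN iffD1, rotated]) (simp add: Y max_absorb2)
  have X: "0 \<le> ?X \<omega> \<and> ?X \<omega> \<le> inv_into {0..} G B" if "\<omega> \<in> space M" for \<omega>
    using Y[OF that] by (auto intro: inv_into_atLeast_nonneg inv_into_atLeast_mono)
  have GX: "G \<bar>?X \<omega>\<bar> = Y \<omega>" if "\<omega> \<in> space M" for \<omega>
    using X[OF that] Y[OF that] by (simp add: f_inv_into_atLeast)
  have int_X: "integrable M ?X"
    using X by (intro integrable_abs_bounded[OF Xm, where B="inv_into {0..} G B"]) auto
  have int_Y: "integrable M (\<lambda>\<omega>. G \<bar>?X \<omega>\<bar>)"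
    using Y GX by (intro integrable_abs_bounded[where B=B]) (auto cong: measurable_cong simp: Ym)
  have "G \<bar>\<integral>\<omega>. ?X \<omega> \<partial>M\<bar> \<le> (\<integral>\<omega>. G \<bar>?X \<omega>\<bar> \<partial>M)"
    using convex_on_comp_abs[OF strict_mono_on_imp_mono_on[OF strict_mono] assms(2)] int_X int_Y
    by (intro jensens_inequality[where I=UNIV]) auto
  moreover have "0 \<le> (\<integral>\<omega>. ?X \<omega> \<partial>M)" using X by (simp add: integral_nonneg)
  moreover have "(\<integral>\<omega>. G \<bar>?X \<omega>\<bar> \<partial>M) = (\<integral>\<omega>. Y \<omega> \<partial>M)"
    using GX by (rule Bochner_Integration.integral_cong[OF refl])
  ultimately show ?thesis by simp
qed

end

lemma fenchel_young_conj_fun: "0 \<le> u \<Longrightarrow> ereal (v * u - G u) \<le> conj_fun G v"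
  unfolding conj_fun_def by (intro SUP_upper) auto

text \<open>
  Combined with Fenchel--Young, \<open>G x \<le> r + v x / 2\<close> and \<open>H(v) \<le> 2 r\<close> give
  \<open>G x \<le> r + (G x + 2r) / 2\<close>.
\<close>

lemma le_of_conj_fun_bound:
  assumes "0 \<le> x" and G: "G x \<le> r + v * x / 2" and H: "conj_fun G v / 2 \<le> ereal r"
  shows "G x \<le> 4 * r"
proof -
  have young: "ereal (v * x - G x) \<le> conj_fun G v" by (rule fenchel_young_conj_fun[OF assms(1)])
  have "v * x - G x \<le> 2 * r"
  proof (cases "conj_fun G v")
    case (real c)
    then show ?thesis using young H by simp
  next
    case PInf
    then show ?thesis using H by simp
  next
    case MInf
    then show ?thesis using young by simp
  qed
  then show ?thesis using G by linarith
qed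

lemma (in rademacher_sample) jensen_inv_into_sup_empsq:
  fixes G :: "real \<Rightarrow> real"
  assumes "strict_mono_on {0..} G" "bij_betw G {0..} {0..}" "convex_on {0..} G"
  shows "G (\<integral>\<omega>. inv_into {0..} G (sup_empsq (\<lambda>i. z i \<omega>)) \<partial>M) \<le> (\<integral>\<omega>. sup_empsq (\<lambda>i. z i \<omega>) \<partial>M)"
proof -
  have "sup_empsq (\<lambda>i. z i \<omega>) = sup_empsq (\<lambda>i\<in>{..<n}. z i \<omega>)" for \<omega>
    by (rule sup_empsq_cong) simp
  then show ?thesis
    by (simp only:) (rule jensen_inv_into[OF assms(1,2) prob_space_M assms(3), where B="K^2"];
        simp add: sup_empsq_bounds)
qed

theorem mainTheorem4:
  fixes M :: "'a measure"
    and Qz :: "'x::euclidean_space measure"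
    and z :: "nat \<Rightarrow> 'a \<Rightarrow> 'x"
    and eps :: "nat \<Rightarrow> 'a \<Rightarrow> real"
    and n :: nat
    and R K :: real
    and \<G> :: "('x \<Rightarrow> real) set"
    and G :: "real \<Rightarrow> real"
  assumes "prob_space M"
    and "0 < n"
    and "prob_space Qz" and "sets Qz = sets borel"
    and rv: "\<And>i. i < n \<Longrightarrow> (\<lambda>\<omega>. (z i \<omega>, eps i \<omega>)) \<in> borel_measurable M"
    and indep: "prob_space.indep_vars M (\<lambda>_. borel) (\<lambda>i \<omega>. (z i \<omega>, eps i \<omega>)) {..<n}"
    and distr: "\<And>i. i < n \<Longrightarrow> distr M (Qz \<Otimes>\<^sub>M rademacher) (\<lambda>\<omega>. (z i \<omega>, eps i \<omega>)) = Qz \<Otimes>\<^sub>M rademacher"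
    and "0 < R" and "0 < K"
    and "countable \<G>" and "\<G> \<noteq> {}"
    and meas: "\<And>g. g \<in> \<G> \<Longrightarrow> g \<in> borel_measurable borel"
    and supb: "\<And>g x. g \<in> \<G> \<Longrightarrow> \<bar>g x\<bar> \<le> K"
    and l2b: "\<And>g. g \<in> \<G> \<Longrightarrow> sqrt (L2sq Qz g) \<le> R"
    and "continuous_on {0..} G"
    and "strict_mono_on {0..} G"
    and "strict_convex_on {0..} G"
    and "bij_betw G {0..} {0..}"
    and hyp: "(\<integral>\<omega>. (SUP g\<in>\<G>. \<bar>(1 / real n) * (\<Sum>i<n. g (z i \<omega>) * eps i \<omega>)\<bar>) \<partial>M)
              \<le> (\<integral>\<omega>. inv_into {0..} G (SUP g\<in>\<G>. empsq n (\<lambda>i. z i \<omega>) g) \<partial>M) / sqrt (real n)"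
    and Rbig: "ereal (R^2) \<ge> conj_fun G (16 * K / sqrt (real n)) / 2"
  shows "(\<integral>\<omega>. inv_into {0..} G (SUP g\<in>\<G>. empsq n (\<lambda>i. z i \<omega>) g) \<partial>M)
           \<le> inv_into {0..} G (4 * R^2)
      \<and> (\<integral>\<omega>. (SUP g\<in>\<G>. \<bar>empsq n (\<lambda>i. z i \<omega>) g - L2sq Qz g\<bar>) \<partial>M)
           \<le> 8 * K * inv_into {0..} G (4 * R^2) / sqrt (real n)"
proof -
  interpret rademacher_sample Qz \<G> n K M z eps
    by (intro rademacher_sample.intro symmetrization.intro rademacher_sample_axioms.intro)
      (use assms in auto)
  note G = \<open>strict_mono_on {0..} G\<close> \<open>bij_betw G {0..} {0..}\<close>
  have convex: "convex_on {0..} G"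
    by (rule convex_on_if_strict_convex_on) (auto simp: assms convex_real_interval)
  define x where "x = (\<integral>\<omega>. inv_into {0..} G (sup_empsq (\<lambda>i. z i \<omega>)) \<partial>M)"
  have x_eq: "(\<integral>\<omega>. inv_into {0..} G (SUP g\<in>\<G>. empsq n (\<lambda>i. z i \<omega>) g) \<partial>M) = x"
    by (simp add: x_def sup_empsq_def)
  have "0 \<le> x"
    unfolding x_def
    by (intro Bochner_Integration.integral_nonneg inv_into_atLeast_nonneg[OF G]) (simp add: sup_empsq_bounds)
  have "(\<integral>\<omega>. sup_dev (\<lambda>i. z i \<omega>) \<partial>M) \<le> 8 * K * (\<integral>\<omega>. sup_rad (\<lambda>i. z i \<omega>) (\<lambda>i. eps i \<omega>) \<partial>M)"
    by (rule integral_sup_dev_le_rademacher_pairs)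
  also have "\<dots> \<le> 8 * K * (x / sqrt (real n))"
    using hyp[unfolded x_eq] K_pos by (intro mult_left_mono) (simp_all add: sup_rad_def)
  finally have dev: "(\<integral>\<omega>. sup_dev (\<lambda>i. z i \<omega>) \<partial>M) \<le> 8 * K * x / sqrt (real n)" by simp
  have "G x \<le> (\<integral>\<omega>. sup_empsq (\<lambda>i. z i \<omega>) \<partial>M)"
    unfolding x_def by (rule jensen_inv_into_sup_empsq[OF G convex])
  also have "\<dots> \<le> R^2 + (\<integral>\<omega>. sup_dev (\<lambda>i. z i \<omega>) \<partial>M)"
    using l2b L2sq_bounds by (intro integral_sup_empsq_le) (metis sqrt_le_D)
  finally have "G x \<le> R^2 + (16 * K / sqrt (real n)) * x / 2" using dev by simp
  then have "x \<le> inv_into {0..} G (4 * R^2)"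
    using le_of_conj_fun_bound[OF \<open>0 \<le> x\<close> _ Rbig] \<open>0 \<le> x\<close> by (intro le_inv_into_atLeast[OF G]) auto
  moreover have "8 * K * x / sqrt (real n) \<le> 8 * K * inv_into {0..} G (4 * R^2) / sqrt (real n)"
    using calculation K_pos by (intro divide_right_mono mult_left_mono) auto
  ultimately show ?thesis
    using dev by (simp add: x_eq sup_dev_def)
qed

end
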